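(* Let $0\le\theta\le1$, $\lambda,\sigma\in\mathbb{R}$, $x_0\ne0$, and let $B$ be a standard scalar Brownian motion. For $0<\Delta t<1$ with $1-\lambda\theta\Delta t\ne0$, let $t_n=n\Delta t$, $\Delta B_n=B(t_{n+1})-B(t_n)$, and let $\{X_n^\theta\}$ be the $\theta$-Milstein scheme defined by $X_0^\theta=x_0$ and $$X_n^\theta=X_{n-1}^\theta+\big[\lambda\theta X_n^\theta+\lambda(1-\theta)X_{n-1}^\theta\big]\Delta t+\sigma X_{n-1}^\theta\Delta B_{n-1}+\tfrac{\sigma^2}{2}X_{n-1}^\theta(\Delta B_{n-1}^2-\Delta t),\quad n\ge1.$$ Then there exist $0<\Delta t_3<1$ and $C_5,C_6>0$ such that for all $0<\Delta t<\Delta t_3$, $$\lambda+\tfrac{\sigma^2}{2}-C_5\Delta t\le\limsup_{n\to\infty}\frac1{t_n}\log\big[\mathbb E|X_n^\theta|^2\big]^{1/2}\le\lambda+\tfrac{\sigma^2}{2}+C_5\Delta t,$$ and almost surely $$\lambda-\tfrac{\sigma^2}{2}-C_6\Delta t^{1/2}\le\limsup_{n\to\infty}\frac1{t_n}\log|X_n^\theta|\le\lambda-\tfrac{\sigma^2}{2}+C_6\Delta t^{1/2}.$$ Consequently, for $0<\Delta t<\Delta t_3$: (a) if $\lambda+\frac{\sigma^2}{2}<0$ (resp. $>0$) then $X_n^\theta$ is mean-square exponentially stable (resp. mean-square exponentially blowing up); (b) if $\lambda-\frac{\sigma^2}{2}<0$ (resp. $>0$) then $X_n^\theta$ is almost-surely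 exponentially stable (resp. almost-surely exponentially blowing up).
   Context: Terminology: a sequence $X_n$ is mean-square exponentially stable if there exist $C,\alpha>0$ with $[\mathbb E|X_n|^2]^{1/2}\le Ce^{-\alpha t_n}$ for all large $n$, and mean-square exponentially blowing up if there exist $C,\beta>0$ with $[\mathbb E|X_n|^2]^{1/2}\ge Ce^{\beta t_n}$ for all large $n$; almost-surely exponentially stable (resp. blowing up) means that almost surely $|X_n|\le Ce^{-\alpha t_n}$ (resp. $|X_n|\ge Ce^{\beta t_n}$) for all large $n$, for some $\alpha>0$ (resp. $\beta>0$) and a (possibly random) $C>0$. Constants may depend on $\lambda,\sigma,\theta$. *)

theory Defs
  imports "HOL-Probability.Probability"
begin

definition brownian_motion :: "'a measure \<Rightarrow> (real \<Rightarrow> 'a \<Rightarrow> real) \<Rightarrow> bool" where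
  "brownian_motion M B \<longleftrightarrow>
     prob_space M \<and>
     (\<forall>t\<ge>0. B t \<in> borel_measurable M) \<and>
     (AE \<omega> in M. B 0 \<omega> = 0) \<and>
     (AE \<omega> in M. continuous_on {0..} (\<lambda>t. B t \<omega>)) \<and>
     (\<forall>s t. 0 \<le> s \<and> s < t \<longrightarrow>
        distributed M lborel (\<lambda>\<omega>. B t \<omega> - B s \<omega>)
          (\<lambda>x. ennreal (normal_density 0 (sqrt (t - s)) x))) \<and>
     (\<forall>ts :: real list. sorted_wrt (<) ts \<and> ts \<noteq> [] \<and> hd ts \<ge> 0 \<longrightarrow>
        prob_space.indep_vars M (\<lambda>_. borel)
          (\<lambda>i \<omega>. B (ts ! Suc i) \<omega> - B (ts ! i) \<omega>) {..< length ts - 1})"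

definition theta_milstein ::
  "'a measure \<Rightarrow> (real \<Rightarrow> 'a \<Rightarrow> real) \<Rightarrow> real \<Rightarrow> real \<Rightarrow> real \<Rightarrow> real \<Rightarrow> real
     \<Rightarrow> (nat \<Rightarrow> 'a \<Rightarrow> real) \<Rightarrow> bool" where
  "theta_milstein M B \<theta> lam \<sigma> x0 dt X \<longleftrightarrow>
     (\<forall>\<omega>\<in>space M. X 0 \<omega> = x0 \<and>
        (\<forall>n\<ge>1. let dB = B (real n * dt) \<omega> - B (real (n - 1) * dt) \<omega> in
           X n \<omega> = X (n - 1) \<omega>
             + (lam * \<theta> * X n \<omega> + lam * (1 - \<theta>) * X (n - 1) \<omega>) * dt
             + \<sigma> * X (n - 1) \<omega> * dB
             + \<sigma>\<^sup>2 / 2 * X (n - 1) \<omega> * (dB\<^sup>2 - dt)))"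

definition ms_exp_stable :: "'a measure \<Rightarrow> real \<Rightarrow> (nat \<Rightarrow> 'a \<Rightarrow> real) \<Rightarrow> bool" where
  "ms_exp_stable M dt X \<longleftrightarrow> (\<exists>C>0. \<exists>\<alpha>>0. \<forall>\<^sub>F n in sequentially.
     sqrt (integral\<^sup>L M (\<lambda>\<omega>. (X n \<omega>)\<^sup>2)) \<le> C * exp (- \<alpha> * (real n * dt)))"

definition ms_exp_blowup :: "'a measure \<Rightarrow> real \<Rightarrow> (nat \<Rightarrow> 'a \<Rightarrow> real) \<Rightarrow> bool" where
  "ms_exp_blowup M dt X \<longleftrightarrow> (\<exists>C>0. \<exists>\<beta>>0. \<forall>\<^sub>F n in sequentially.
     sqrt (integral\<^sup>L M (\<lambda>\<omega>. (X n \<omega>)\<^sup>2)) \<ge> C * exp (\<beta> * (real n * dt)))"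

definition as_exp_stable :: "'a measure \<Rightarrow> real \<Rightarrow> (nat \<Rightarrow> 'a \<Rightarrow> real) \<Rightarrow> bool" where
  "as_exp_stable M dt X \<longleftrightarrow> (\<exists>\<alpha>>0. AE \<omega> in M. \<exists>C>0. \<forall>\<^sub>F n in sequentially.
     \<bar>X n \<omega>\<bar> \<le> C * exp (- \<alpha> * (real n * dt)))"

definition as_exp_blowup :: "'a measure \<Rightarrow> real \<Rightarrow> (nat \<Rightarrow> 'a \<Rightarrow> real) \<Rightarrow> bool" where
  "as_exp_blowup M dt X \<longleftrightarrow> (\<exists>\<beta>>0. AE \<omega> in M. \<exists>C>0. \<forall>\<^sub>F n in sequentially.
     \<bar>X n \<omega>\<bar> \<ge> C * exp (\<beta> * (real n * dt)))"

end

(* Since the scheme is linear, each implicit step can be solved, and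
   X_n = x0 * prod_{k<n} R(B(t_{k+1}) - B(t_k)) with i.i.d. factors
   R(x) = (1 + lam (1 - theta) dt + sigma x + sigma^2/2 (x^2 - dt)) / (1 - lam theta dt).

   Mean square: E X_n^2 = x0^2 (E R^2)^n, and E R^2 is a rational function of dt with
   ln E R^2 = (2 lam + sigma^2) dt + O(dt^2).

   Almost surely: with h = sqrt dt, a third-order Taylor expansion of y^(+-h) at y = 1 and
   Gaussian moments up to order eight give E R^(+-h) <= 1 +- h^3 (lam - sigma^2/2) + C h^4.
   By Markov's inequality and the Borel-Cantelli lemma, (prod_{k<n} R_k)^(+-h) eventually stays
   below exp(n (+-h^3 (lam - sigma^2/2) + 2 C h^4)), so ln|X_n| / t_n eventually lies within
   2 C h of lam - sigma^2/2. *)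

theory Submission
  imports Defs
begin

lemma powr_taylor_3:
  fixes q y :: real
  assumes y: "y > 0"
  obtains t where "t > 0" "min y 1 \<le> t" "t \<le> max y 1"
    "y powr q = 1 + q * (y - 1) + q * (q - 1) / 2 * (y - 1)^2
       + q * (q - 1) * (q - 2) / 6 * t powr (q - 3) * (y - 1)^3"
proof (cases "y = 1")
  case True
  then show ?thesis by (intro that[of 1]) auto
next
  case False
  define D where "D m t = (\<Prod>j<m. (q - real j)) * t powr (q - real m)" for m t
  have D_deriv: "DERIV (D m) t :> D (Suc m) t" if "min y 1 \<le> t" for m t
  proof -
    have "t > 0" using y that by (auto simp: min_def split: if_splits)
    then have "DERIV (D m) t :> (\<Prod>j<m. (q - real j)) * ((q - real m) * t powr (q - real m - 1))"
      unfolding D_def by (intro DERIV_cmult has_real_derivative_powr)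
    then show ?thesis by (simp add: D_def algebra_simps)
  qed
  have "D 0 = (\<lambda>t. t powr q)" by (simp add: D_def fun_eq_iff)
  then have "\<exists>t. (if y < 1 then y < t \<and> t < 1 else 1 < t \<and> t < y) \<and>
      y powr q = (\<Sum>m<3. D m 1 / fact m * (y - 1)^m) + D 3 t / fact 3 * (y - 1)^3"
    by (intro Taylor[of 3 D _ "min y 1" "max y 1"]) (use D_deriv y False in auto)
  then obtain t where t: "if y < 1 then y < t \<and> t < 1 else 1 < t \<and> t < y"
    and eq: "y powr q = (\<Sum>m<3. D m 1 / fact m * (y - 1)^m) + D 3 t / fact 3 * (y - 1)^3"
    by blast
  show ?thesis
  proof (rule that)
    show "t > 0" "min y 1 \<le> t" "t \<le> max y 1" using t y by (auto split: if_splits)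
    show "y powr q = 1 + q * (y - 1) + q * (q - 1) / 2 * (y - 1)^2
       + q * (q - 1) * (q - 2) / 6 * t powr (q - 3) * (y - 1)^3"
    proof -
      have "(\<Sum>m<3. D m 1 / fact m * (y - 1)^m) = 1 + q * (y - 1) + q * (q - 1) / 2 * (y - 1)^2"
        by (simp add: D_def numeral_3_eq_3 lessThan_Suc fact_numeral power2_eq_square)
      moreover have "D 3 t / fact 3 * (y - 1)^3 = q * (q - 1) * (q - 2) / 6 * t powr (q - 3) * (y - 1)^3"
        by (simp add: D_def numeral_3_eq_3 lessThan_Suc fact_numeral algebra_simps)
      ultimately show ?thesis unfolding eq by simp
    qed
  qed
qed

lemma powr_le_taylor_2:
  fixes p y :: real
  assumes p: "0 < p" "p \<le> 1" and y: "y > 0"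
  shows "y powr p \<le> 1 + p * (y - 1) - p * (1 - p) / 2 * (y - 1)^2 + p * \<bar>y - 1\<bar>^3"
proof -
  obtain t where t: "t > 0" "min y 1 \<le> t" "t \<le> max y 1"
    and eq: "y powr p = 1 + p * (y - 1) + p * (p - 1) / 2 * (y - 1)^2
       + p * (p - 1) * (p - 2) / 6 * t powr (p - 3) * (y - 1)^3"
    using powr_taylor_3[OF y] .
  have c_eq: "p * (p - 1) * (p - 2) / 6 = p * ((1 - p) * (2 - p) / 6)" by (simp add: algebra_simps)
  have c_nonneg: "0 \<le> (1 - p) * (2 - p) / 6" using p by simp
  have c_le: "(1 - p) * (2 - p) / 6 \<le> 1"
  proof -
    have "(1 - p) * (2 - p) \<le> 1 * 2" using p by (intro mult_mono) auto
    then show ?thesis by simp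
  qed
  have "p * (p - 1) * (p - 2) / 6 * t powr (p - 3) * (y - 1)^3 \<le> p * \<bar>y - 1\<bar>^3"
  proof (cases "y > 1")
    case True
    then have "t powr (p - 3) \<le> t powr 0" using t p by (intro powr_mono) auto
    then have "t powr (p - 3) \<le> 1" using t by simp
    then have "(1 - p) * (2 - p) / 6 * t powr (p - 3) * (y - 1)^3 \<le> 1 * 1 * (y - 1)^3"
      using True c_nonneg c_le by (intro mult_mono) auto
    then show ?thesis using True p unfolding c_eq by (simp add: mult.assoc mult_left_mono)
  next
    case False
    then have "(y - 1)^3 \<le> 0" by (simp add: power_le_zero_eq_numeral)
    then have "p * ((1 - p) * (2 - p) / 6) * t powr (p - 3) * (y - 1)^3 \<le> 0"
      using p c_nonneg by (intro mult_nonneg_nonpos) auto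
    moreover have "0 \<le> p * \<bar>y - 1\<bar>^3" using p by simp
    ultimately show ?thesis unfolding c_eq by linarith
  qed
  moreover have "p * (p - 1) / 2 * (y - 1)^2 = - (p * (1 - p) / 2 * (y - 1)^2)"
    by (simp add: field_simps)
  ultimately show ?thesis unfolding eq by linarith
qed

lemma powr_minus_le_taylor_2:
  fixes p y :: real
  assumes p: "0 < p" "p \<le> 1" and y: "y \<ge> 1/5"
  shows "y powr (-p) \<le> 1 - p * (y - 1) + p * (p + 1) / 2 * (y - 1)^2 + 625 * p * \<bar>y - 1\<bar>^3"
proof -
  obtain t where t: "t > 0" "min y 1 \<le> t" "t \<le> max y 1"
    and eq: "y powr (-p) = 1 + (-p) * (y - 1) + (-p) * (-p - 1) / 2 * (y - 1)^2
       + (-p) * (-p - 1) * (-p - 2) / 6 * t powr (-p - 3) * (y - 1)^3"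
    using powr_taylor_3[of y "-p"] y by auto
  have c_eq: "(-p) * (-p - 1) * (-p - 2) / 6 = - (p * ((p + 1) * (p + 2) / 6))"
    by (simp add: field_simps)
  have c_nonneg: "0 \<le> (p + 1) * (p + 2) / 6" using p by simp
  have c_le: "(p + 1) * (p + 2) / 6 \<le> 1"
  proof -
    have "(p + 1) * (p + 2) \<le> 2 * 3" using p by (intro mult_mono) auto
    then show ?thesis by simp
  qed
  have "- (p * ((p + 1) * (p + 2) / 6)) * t powr (-p - 3) * (y - 1)^3 \<le> 625 * p * \<bar>y - 1\<bar>^3"
  proof (cases "y < 1")
    case True
    then have "t \<ge> 1/5" using t y by auto
    have "t powr (-p - 3) = 1 / t powr (p + 3)" using powr_minus_divide[of t "p + 3"] by simp
    also have "\<dots> = (1/t) powr (p + 3)" using t by (simp add: powr_divide)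
    also have "\<dots> \<le> 5 powr (p + 3)"
      using \<open>t \<ge> 1/5\<close> p by (intro powr_mono2) (auto simp: field_simps)
    also have "\<dots> \<le> 5 powr 4" using p by (intro powr_mono) auto
    finally have "t powr (-p - 3) \<le> 625" by (simp add: powr_numeral)
    then have "(p + 1) * (p + 2) / 6 * t powr (-p - 3) * \<bar>y - 1\<bar>^3 \<le> 1 * 625 * \<bar>y - 1\<bar>^3"
      using c_nonneg c_le by (intro mult_mono) auto
    moreover have "(y - 1)^3 = - (\<bar>y - 1\<bar>^3)" using True by (simp add: abs_if power3_eq_cube algebra_simps)
    ultimately show ?thesis using p by (simp add: mult.assoc mult_left_mono)
  next
    case False
    then have "0 \<le> p * ((p + 1) * (p + 2) / 6) * t powr (-p - 3) * (y - 1)^3"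
      using p by simp
    moreover have "0 \<le> 625 * p * \<bar>y - 1\<bar>^3" using p by simp
    ultimately show ?thesis unfolding mult_minus_left by linarith
  qed
  moreover have "(-p) * (-p - 1) / 2 * (y - 1)^2 = p * (p + 1) / 2 * (y - 1)^2"
    by (simp add: algebra_simps)
  ultimately show ?thesis unfolding eq c_eq by linarith
qed

lemma power4_sum3_le:
  fixes a b c :: real
  shows "(a + b + c)^4 \<le> 27 * (a^4 + b^4 + c^4)"
proof -
  have sq3: "(u + v + w)^2 \<le> 3 * (u^2 + v^2 + w^2)" for u v w :: real
  proof -
    have "3 * (u^2 + v^2 + w^2) - (u + v + w)^2 = (u - v)^2 + (v - w)^2 + (u - w)^2"
      by (simp add: power2_eq_square algebra_simps)
    then show ?thesis by (smt (verit) zero_le_power2)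
  qed
  have "(a + b + c)^4 = ((a + b + c)^2)^2" by (simp flip: power_mult)
  also have "\<dots> \<le> (3 * (a^2 + b^2 + c^2))^2" using sq3 by (intro power_mono) auto
  also have "\<dots> = 9 * (a^2 + b^2 + c^2)^2" by (simp add: power2_eq_square algebra_simps)
  also have "\<dots> \<le> 9 * (3 * ((a^2)^2 + (b^2)^2 + (c^2)^2))" by (intro mult_left_mono sq3) simp
  finally show ?thesis by (simp flip: power_mult)
qed

lemma ln_ge_sub_sq:
  fixes x :: real
  assumes "1/2 \<le> x"
  shows "(x - 1) - 2 * (x - 1)\<^sup>2 \<le> ln x"
proof -
  have "(x - 1)\<^sup>2 * 1 \<le> (x - 1)\<^sup>2 * (2 * x)" using assms by (intro mult_left_mono) auto
  then have "(x - 1) - 2 * (x - 1)\<^sup>2 \<le> (x - 1) - (x - 1)\<^sup>2 / x"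
    using assms by (simp add: pos_divide_le_eq mult_ac)
  also have "\<dots> = (x - 1) / x" using assms by (simp add: field_simps power2_eq_square)
  also have "\<dots> \<le> ln x" using ln_diff_le[of 1 x] assms by (simp add: field_simps)
  finally show ?thesis .
qed

section \<open>Gaussian moments\<close>

definition gaussian_moment :: "real \<Rightarrow> nat \<Rightarrow> real" where
  "gaussian_moment s k = (if even k then fact k * s^k / (2^(k div 2) * fact (k div 2)) else 0)"

lemma has_bochner_integral_normal_moment:
  assumes s: "s > 0"
  shows "has_bochner_integral lborel (\<lambda>x. normal_density 0 s x * x^k) (gaussian_moment s k)"
proof (cases "even k")
  case True
  then obtain j where k: "k = 2 * j" by (auto elim: evenE)
  have "fact (2 * j) / ((2 / s\<^sup>2)^j * fact j) = gaussian_moment s k"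
    using s by (simp add: gaussian_moment_def k power_divide field_simps flip: power_mult)
  then show ?thesis using normal_moment_even[OF s, of 0 j] by (simp add: k)
next
  case False
  then obtain j where k: "k = 2 * j + 1" by (auto elim: oddE)
  then show ?thesis using normal_moment_odd[OF s, of 0 j] by (simp add: gaussian_moment_def)
qed

lemma gaussian_moment_simps [simp]:
  "gaussian_moment s 0 = 1" "gaussian_moment s (Suc 0) = 0" "gaussian_moment s 2 = s^2"
  "gaussian_moment s 3 = 0" "gaussian_moment s 4 = 3 * s^4" "gaussian_moment s 5 = 0"
  "gaussian_moment s 6 = 15 * s^6" "gaussian_moment s 7 = 0" "gaussian_moment s 8 = 105 * s^8"
  by (simp_all add: gaussian_moment_def fact_numeral)

lemma has_bochner_integral_normal_poly:
  assumes "s > 0"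
  shows "has_bochner_integral lborel (\<lambda>x. normal_density 0 s x * (\<Sum>k\<le>n. a k * x^k))
    (\<Sum>k\<le>n. a k * gaussian_moment s k)"
proof -
  have "has_bochner_integral lborel (\<lambda>x. \<Sum>k\<le>n. a k * (normal_density 0 s x * x^k))
      (\<Sum>k\<le>n. a k * gaussian_moment s k)"
    by (intro has_bochner_integral_sum has_bochner_integral_mult_right
        has_bochner_integral_normal_moment assms)
  then show ?thesis by (simp add: sum_distrib_left algebra_simps)
qed

lemma has_bochner_integral_normal_poly8:
  assumes "s > 0"
  shows "has_bochner_integral lborel (\<lambda>x. normal_density 0 s x *
      (a0 + a1*x + a2*x^2 + a3*x^3 + a4*x^4 + a5*x^5 + a6*x^6 + a7*x^7 + a8*x^8))
    (a0 + a2* s^2 + 3*a4* s^4 + 15*a6* s^6 + 105*a8* s^8)"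
proof -
  define a where "a k = [a0, a1, a2, a3, a4, a5, a6, a7, a8] ! k" for k
  have sum9: "(\<Sum>k\<le>8. f k) = f 0 + f 1 + f 2 + f 3 + f 4 + f 5 + f 6 + f 7 + f (8::nat)"
    for f :: "nat \<Rightarrow> real"
    by (simp add: eval_nat_numeral atMost_Suc)
  show ?thesis
    using has_bochner_integral_normal_poly[OF assms, where n=8 and a=a] unfolding sum9
    by (simp add: a_def mult_ac)
qed

lemma has_bochner_integral_normal_quadratic:
  assumes "s > 0"
  shows "has_bochner_integral lborel (\<lambda>x. normal_density 0 s x * (c + v * x + b * (x^2 - s^2))) c"
proof -
  have "has_bochner_integral lborel (\<lambda>x. normal_density 0 s x *
      ((c - b * s^2) + v * x + b * x^2 + 0 * x^3 + 0 * x^4 + 0 * x^5 + 0 * x^6 + 0 * x^7 + 0 * x^8))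
    ((c - b * s^2) + b * s^2 + 3 * 0 * s^4 + 15 * 0 * s^6 + 105 * 0 * s^8)"
    by (rule has_bochner_integral_normal_poly8[OF assms])
  then show ?thesis by (simp add: algebra_simps)
qed

lemma has_bochner_integral_normal_quadratic_sq:
  assumes "s > 0"
  shows "has_bochner_integral lborel (\<lambda>x. normal_density 0 s x * (c + v * x + b * (x^2 - s^2))^2)
    (c^2 + v^2 * s^2 + 2 * b^2 * s^4)"
proof -
  define e where "e = c - b * s^2"
  have moment_eq: "e^2 + (v^2 + 2 * e * b) * s^2 + 3 * b^2 * s^4 + 15 * 0 * s^6 + 105 * 0 * s^8
      = c^2 + v^2 * s^2 + 2 * b^2 * s^4"
    by (simp add: e_def power2_eq_square power4_eq_xxxx algebra_simps)
  have poly_eq: "e^2 + (2 * e * v) * x + (v^2 + 2 * e * b) * x^2 + (2 * v * b) * x^3 + b^2 * x^4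
        + 0 * x^5 + 0 * x^6 + 0 * x^7 + 0 * x^8 = (c + v * x + b * (x^2 - s^2))^2" for x
    by (simp add: e_def power2_eq_square power3_eq_cube power4_eq_xxxx algebra_simps)
  show ?thesis
    using has_bochner_integral_normal_poly8[OF assms, of "e^2" "2 * e * v" "v^2 + 2 * e * b"
        "2 * v * b" "b^2" 0 0 0 0]
    unfolding poly_eq moment_eq .
qed

lemma nonneg_dominated_integral_le:
  fixes f g :: "'a \<Rightarrow> real"
  assumes g: "has_bochner_integral M g I" and f: "f \<in> borel_measurable M"
    and f_nonneg: "\<And>x. 0 \<le> f x" and f_le: "\<And>x. f x \<le> g x"
  shows "integrable M f" and "integral\<^sup>L M f \<le> I"
proof -
  have g_nonneg: "0 \<le> g x" for x using f_nonneg f_le order_trans by blast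
  show "integrable M f"
  proof (rule Bochner_Integration.integrable_bound[of M g f])
    show "integrable M g" using g by (simp add: has_bochner_integral_iff)
    show "AE x in M. norm (f x) \<le> norm (g x)" using f_nonneg f_le g_nonneg by (intro AE_I2) auto
  qed (fact f)
  have "integral\<^sup>L M f \<le> integral\<^sup>L M g"
    using g f_le g_nonneg by (intro integral_mono') (auto simp: has_bochner_integral_iff)
  then show "integral\<^sup>L M f \<le> I" using g by (simp add: has_bochner_integral_iff)
qed

lemma (in prob_space) integral_prod_iid:
  fixes D :: "nat \<Rightarrow> 'a \<Rightarrow> real" and g dens :: "real \<Rightarrow> real"
  assumes indep: "indep_vars (\<lambda>_. borel) D {..<n}"
    and distr: "\<And>k. distributed M lborel (D k) (\<lambda>x. ennreal (dens x))"
    and dens_nonneg: "\<And>x. 0 \<le> dens x"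
    and g: "g \<in> borel_measurable borel"
    and g_int: "integrable lborel (\<lambda>x. dens x * g x)"
  shows "integrable M (\<lambda>\<omega>. \<Prod>k<n. g (D k \<omega>))"
    and "(\<integral>\<omega>. (\<Prod>k<n. g (D k \<omega>)) \<partial>M) = (\<integral>x. dens x * g x \<partial>lborel)^n"
proof -
  have indep_g: "indep_vars (\<lambda>_. borel) (\<lambda>k \<omega>. g (D k \<omega>)) {..<n}"
    by (rule indep_vars_compose2[OF indep]) (use g in simp)
  have int: "integrable M (\<lambda>\<omega>. g (D k \<omega>))" for k
    using distributed_integrable[OF distr[of k], of g] g g_int dens_nonneg by simp
  have val: "(\<integral>\<omega>. g (D k \<omega>) \<partial>M) = (\<integral>x. dens x * g x \<partial>lborel)" for k
    using distributed_integral[OF distr[of k], of g] g dens_nonneg by simp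
  show "integrable M (\<lambda>\<omega>. \<Prod>k<n. g (D k \<omega>))"
    using indep_vars_integrable[OF _ indep_g] int by simp
  have "(\<integral>\<omega>. (\<Prod>k<n. g (D k \<omega>)) \<partial>M) = (\<Prod>k<n. \<integral>\<omega>. g (D k \<omega>) \<partial>M)"
    using indep_vars_lebesgue_integral[OF _ indep_g] int by simp
  then show "(\<integral>\<omega>. (\<Prod>k<n. g (D k \<omega>)) \<partial>M) = (\<integral>x. dens x * g x \<partial>lborel)^n"
    by (simp add: val)
qed

text \<open>Markov's inequality makes the probabilities of the exceptional events geometrically small,
  so the first Borel--Cantelli lemma applies.\<close>
lemma (in prob_space) AE_eventually_less_exp:
  fixes S :: "nat \<Rightarrow> 'a \<Rightarrow> real"
  assumes int: "\<And>n. integrable M (S n)" and nonneg: "\<And>n \<omega>. 0 \<le> S n \<omega>"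
    and bound: "\<And>n. expectation (S n) \<le> exp (real n * a)" and "a < b"
  shows "AE \<omega> in M. eventually (\<lambda>n. S n \<omega> < exp (real n * b)) sequentially"
proof -
  define A where "A n = {\<omega>\<in>space M. exp (real n * b) \<le> S n \<omega>}" for n
  have [measurable]: "S n \<in> borel_measurable M" for n using int by auto
  have A_sets: "A n \<in> sets M" for n unfolding A_def by measurable
  have measure_A: "measure M (A n) \<le> exp (a - b) ^ n" for n
  proof -
    have "measure M (A n) \<le> expectation (S n) / exp (real n * b)"
      unfolding A_def using int nonneg by (intro integral_Markov_inequality_measure) auto
    also have "\<dots> \<le> exp (real n * a) / exp (real n * b)" using bound by (simp add: divide_right_mono)
    also have "\<dots> = exp (real n * (a - b))" by (simp add: right_diff_distrib exp_diff)
    also have "\<dots> = exp (a - b) ^ n" by (rule exp_of_nat_mult)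
    finally show ?thesis .
  qed
  have "summable (\<lambda>n. exp (a - b) ^ n)" using \<open>a < b\<close> by (intro summable_geometric) simp
  then have "summable (\<lambda>n. measure M (A n))"
    by (rule summable_comparison_test'[where N=0]) (simp add: measure_A)
  then have "AE \<omega> in M. eventually (\<lambda>n. \<omega> \<in> space M - A n) sequentially"
    by (intro borel_cantelli_AE1 A_sets) (auto simp: emeasure_eq_measure)
  then show ?thesis
    by (rule AE_mp) (auto intro!: AE_I2 elim!: eventually_mono simp: A_def not_le)
qed

lemma limsup_const_over_n_plus: "limsup (\<lambda>n. ereal (a / real n + T)) = ereal T"
proof -
  have "(\<lambda>n. a * (1 / real n) + T) \<longlonglongrightarrow> a * 0 + T"
    by (intro tendsto_intros lim_const_over_n[of 1, simplified])
  then show ?thesis by (intro lim_imp_Limsup) (auto simp: tendsto_ereal)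
qed

lemma limsup_ln_rate_le:
  fixes x :: "nat \<Rightarrow> real"
  assumes "c > 0" "dt > 0" "\<And>n. x n \<noteq> 0"
    and "eventually (\<lambda>n. \<bar>x n\<bar> \<le> c * exp (\<gamma> * (real n * dt))) sequentially"
  shows "limsup (\<lambda>n. ereal (ln \<bar>x n\<bar> / (real n * dt))) \<le> ereal \<gamma>"
proof -
  have "eventually (\<lambda>n. ln \<bar>x n\<bar> / (real n * dt) \<le> (ln c / dt) / real n + \<gamma>) sequentially"
    using assms(4) eventually_ge_at_top[of 1]
  proof eventually_elim
    case (elim n)
    then have "ln \<bar>x n\<bar> \<le> ln (c * exp (\<gamma> * (real n * dt)))"
      using assms(3) by (intro ln_mono) auto
    then have "ln \<bar>x n\<bar> \<le> ln c + \<gamma> * (real n * dt)" using assms(1) by (simp add: ln_mult)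
    then have "ln \<bar>x n\<bar> / (real n * dt) \<le> (ln c + \<gamma> * (real n * dt)) / (real n * dt)"
      using assms(2) by (intro divide_right_mono) auto
    also have "\<dots> = (ln c / dt) / real n + \<gamma>" using elim assms(2) by (simp add: field_simps)
    finally show ?case .
  qed
  then have "limsup (\<lambda>n. ereal (ln \<bar>x n\<bar> / (real n * dt)))
      \<le> limsup (\<lambda>n. ereal ((ln c / dt) / real n + \<gamma>))"
    by (intro Limsup_mono) (auto elim: eventually_mono)
  then show ?thesis by (simp only: limsup_const_over_n_plus)
qed

lemma limsup_ln_rate_ge:
  fixes x :: "nat \<Rightarrow> real"
  assumes "c > 0" "dt > 0"
    and "eventually (\<lambda>n. c * exp (\<gamma> * (real n * dt)) \<le> \<bar>x n\<bar>) sequentially"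
  shows "ereal \<gamma> \<le> limsup (\<lambda>n. ereal (ln \<bar>x n\<bar> / (real n * dt)))"
proof -
  have "eventually (\<lambda>n. (ln c / dt) / real n + \<gamma> \<le> ln \<bar>x n\<bar> / (real n * dt)) sequentially"
    using assms(3) eventually_ge_at_top[of 1]
  proof eventually_elim
    case (elim n)
    then have "ln (c * exp (\<gamma> * (real n * dt))) \<le> ln \<bar>x n\<bar>"
      using assms(1) by (intro ln_mono) auto
    then have "ln c + \<gamma> * (real n * dt) \<le> ln \<bar>x n\<bar>" using assms(1) by (simp add: ln_mult)
    then have "(ln c + \<gamma> * (real n * dt)) / (real n * dt) \<le> ln \<bar>x n\<bar> / (real n * dt)"
      using assms(2) by (intro divide_right_mono) auto
    moreover have "(ln c / dt) / real n + \<gamma> = (ln c + \<gamma> * (real n * dt)) / (real n * dt)"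
      using elim assms(2) by (simp add: field_simps)
    ultimately show ?case by simp
  qed
  then have "limsup (\<lambda>n. ereal ((ln c / dt) / real n + \<gamma>))
      \<le> limsup (\<lambda>n. ereal (ln \<bar>x n\<bar> / (real n * dt)))"
    by (intro Limsup_mono) (auto elim: eventually_mono)
  then show ?thesis by (simp only: limsup_const_over_n_plus)
qed

section \<open>The scheme as a product of independent factors\<close>

definition bm_increment :: "(real \<Rightarrow> 'a \<Rightarrow> real) \<Rightarrow> real \<Rightarrow> nat \<Rightarrow> 'a \<Rightarrow> real" where
  "bm_increment B dt k \<omega> = B (real (Suc k) * dt) \<omega> - B (real k * dt) \<omega>"

lemma brownian_motion_prob_space: "brownian_motion M B \<Longrightarrow> prob_space M"
  by (simp add: brownian_motion_def)

lemma bm_increment_distributed: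
  assumes "brownian_motion M B" "dt > 0"
  shows "distributed M lborel (bm_increment B dt k) (\<lambda>x. ennreal (normal_density 0 (sqrt dt) x))"
proof -
  have "distributed M lborel (\<lambda>\<omega>. B (real (Suc k) * dt) \<omega> - B (real k * dt) \<omega>)
      (\<lambda>x. ennreal (normal_density 0 (sqrt (real (Suc k) * dt - real k * dt)) x))"
    using assms unfolding brownian_motion_def by auto
  then show ?thesis by (simp add: bm_increment_def[abs_def] algebra_simps)
qed

lemma bm_increments_indep:
  assumes "brownian_motion M B" "dt > 0"
  shows "prob_space.indep_vars M (\<lambda>_. borel) (bm_increment B dt) {..<n}"
proof -
  interpret prob_space M using brownian_motion_prob_space[OF assms(1)] .
  define ts where "ts = map (\<lambda>k. real k * dt) [0..<Suc n]"
  have ts_nth: "i \<le> n \<Longrightarrow> ts ! i = real i * dt" for i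
    by (simp add: ts_def nth_map less_Suc_eq_le del: upt_Suc)
  have "sorted_wrt (<) ts"
    unfolding ts_def sorted_wrt_map
    by (rule sorted_wrt_mono_rel[OF _ sorted_wrt_upt]) (use assms(2) in auto)
  moreover have "ts \<noteq> []" "hd ts \<ge> 0" by (auto simp: ts_def hd_map simp del: upt_Suc)
  ultimately have "indep_vars (\<lambda>_. borel) (\<lambda>i \<omega>. B (ts ! Suc i) \<omega> - B (ts ! i) \<omega>) {..<length ts - 1}"
    using assms(1) unfolding brownian_motion_def by blast
  moreover have "length ts - 1 = n" by (simp add: ts_def)
  ultimately show ?thesis
    by (subst indep_vars_cong[where Y="\<lambda>i \<omega>. B (ts ! Suc i) \<omega> - B (ts ! i) \<omega>" and J="{..<n}"])
       (auto simp: bm_increment_def fun_eq_iff ts_nth)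
qed

definition milstein_factor :: "real \<Rightarrow> real \<Rightarrow> real \<Rightarrow> real \<Rightarrow> real \<Rightarrow> real" where
  "milstein_factor \<theta> lam \<sigma> dt x =
     (1 + lam * (1 - \<theta>) * dt + \<sigma> * x + \<sigma>\<^sup>2 / 2 * (x\<^sup>2 - dt)) / (1 - lam * \<theta> * dt)"

lemma milstein_factor_measurable [measurable]: "milstein_factor \<theta> lam \<sigma> dt \<in> borel_measurable borel"
  unfolding milstein_factor_def by measurable

lemma theta_milstein_eq_prod:
  assumes scheme: "theta_milstein M B \<theta> lam \<sigma> x0 dt X" and den: "1 - lam * \<theta> * dt \<noteq> 0"
    and \<omega>: "\<omega> \<in> space M"
  shows "X n \<omega> = x0 * (\<Prod>k<n. milstein_factor \<theta> lam \<sigma> dt (bm_increment B dt k \<omega>))"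
proof (induction n)
  case 0
  then show ?case using scheme \<omega> by (simp add: theta_milstein_def)
next
  case (Suc n)
  let ?dB = "bm_increment B dt n \<omega>"
  have "X (Suc n) \<omega> = X n \<omega> + (lam * \<theta> * X (Suc n) \<omega> + lam * (1 - \<theta>) * X n \<omega>) * dt
      + \<sigma> * X n \<omega> * ?dB + \<sigma>\<^sup>2 / 2 * X n \<omega> * (?dB\<^sup>2 - dt)"
    using scheme \<omega> unfolding theta_milstein_def Let_def bm_increment_def
    by (metis diff_Suc_1 le_add1 plus_1_eq_Suc)
  then have "X (Suc n) \<omega> * (1 - lam * \<theta> * dt)
      = X n \<omega> * (1 + lam * (1 - \<theta>) * dt + \<sigma> * ?dB + \<sigma>\<^sup>2 / 2 * (?dB\<^sup>2 - dt))"
    by (simp add: field_simps)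
  then have "X (Suc n) \<omega> = X n \<omega> * milstein_factor \<theta> lam \<sigma> dt ?dB"
    using den by (simp add: milstein_factor_def field_simps)
  then show ?case using Suc by (simp add: algebra_simps)
qed

section \<open>Moments of the one-step factor\<close>

text \<open>The step size is \<open>h\<^sup>2\<close>: then \<open>h\<close> is the standard deviation of a Brownian increment, and it
  is also the exponent used in the exponential moment bounds for the almost sure rate.\<close>
locale milstein_step =
  fixes \<theta> lam \<sigma> h :: real
  assumes theta_nonneg: "0 \<le> \<theta>" and theta_le_one: "\<theta> \<le> 1"
    and h_pos: "0 < h" and h_le_one: "h \<le> 1"
    and step_small: "(\<bar>lam\<bar> + \<sigma>\<^sup>2) * h\<^sup>2 \<le> 1/4"
begin

abbreviation R :: "real \<Rightarrow> real" where
  "R \<equiv> milstein_factor \<theta> lam \<sigma> (h\<^sup>2)"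

abbreviation \<phi> :: "real \<Rightarrow> real" where
  "\<phi> \<equiv> normal_density 0 h"

definition den :: real where
  "den = 1 - lam * \<theta> * h\<^sup>2"

definition dev :: "real \<Rightarrow> real" where
  "dev x = R x - 1"

definition K :: real where
  "K = 1 + \<bar>lam\<bar> + \<sigma>\<^sup>2"

lemma abs_lam_h2_le: "\<bar>lam\<bar> * h\<^sup>2 \<le> 1/4"
proof -
  have "\<bar>lam\<bar> * h\<^sup>2 \<le> (\<bar>lam\<bar> + \<sigma>\<^sup>2) * h\<^sup>2" by (intro mult_right_mono) auto
  then show ?thesis using step_small by linarith
qed

lemma abs_lam_theta_h2_le: "\<bar>lam * \<theta> * h\<^sup>2\<bar> \<le> \<bar>lam\<bar> * h\<^sup>2"
  and abs_lam_one_minus_theta_h2_le: "\<bar>lam * (1 - \<theta>) * h\<^sup>2\<bar> \<le> \<bar>lam\<bar> * h\<^sup>2"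
  using theta_nonneg theta_le_one
  by (auto simp: abs_mult intro!: mult_right_mono mult_left_le)

lemma den_ge: "1 - \<bar>lam\<bar> * h\<^sup>2 \<le> den" and den_le: "den \<le> 1 + \<bar>lam\<bar> * h\<^sup>2"
  using abs_lam_theta_h2_le unfolding den_def by (auto simp: abs_le_iff)

lemma den_ge_3_4: "3/4 \<le> den" and den_pos: "0 < den"
  using den_ge abs_lam_h2_le by auto

lemma R_eq: "R x = (1 + lam * (1 - \<theta>) * h\<^sup>2 + \<sigma> * x + \<sigma>\<^sup>2 / 2 * (x\<^sup>2 - h\<^sup>2)) / den"
  by (simp add: milstein_factor_def den_def)

lemma dev_eq: "dev x = (lam * h\<^sup>2 + \<sigma> * x + \<sigma>\<^sup>2 / 2 * (x\<^sup>2 - h\<^sup>2)) / den"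
  using den_pos unfolding dev_def R_eq by (simp add: field_simps den_def)

lemma dev_eq_poly: "dev x = ((lam - \<sigma>\<^sup>2 / 2) * h\<^sup>2 + \<sigma> * x + \<sigma>\<^sup>2 / 2 * x\<^sup>2) / den"
  unfolding dev_eq by (simp add: algebra_simps)

text \<open>The numerator is \<open>(1 + \<sigma> x)\<^sup>2 / 2\<close> plus terms of size at most \<open>1/4\<close>.\<close>
lemma R_ge: "1/5 \<le> R x"
proof -
  have num: "1 + lam * (1 - \<theta>) * h\<^sup>2 + \<sigma> * x + \<sigma>\<^sup>2 / 2 * (x\<^sup>2 - h\<^sup>2)
      = (1 + \<sigma> * x)\<^sup>2 / 2 + 1/2 + lam * (1 - \<theta>) * h\<^sup>2 - \<sigma>\<^sup>2 * h\<^sup>2 / 2"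
    by (simp add: power2_eq_square field_simps)
  have "(\<bar>lam\<bar> + \<sigma>\<^sup>2) * h\<^sup>2 = \<bar>lam\<bar> * h\<^sup>2 + \<sigma>\<^sup>2 * h\<^sup>2" by (simp add: algebra_simps)
  moreover have "0 \<le> \<sigma>\<^sup>2 * h\<^sup>2" by simp
  ultimately have "\<bar>lam\<bar> * h\<^sup>2 + \<sigma>\<^sup>2 * h\<^sup>2 / 2 \<le> 1/4" using step_small by linarith
  moreover have "- (\<bar>lam\<bar> * h\<^sup>2) \<le> lam * (1 - \<theta>) * h\<^sup>2"
    using abs_lam_one_minus_theta_h2_le by (simp add: abs_le_iff)
  ultimately have "1/4 \<le> 1 + lam * (1 - \<theta>) * h\<^sup>2 + \<sigma> * x + \<sigma>\<^sup>2 / 2 * (x\<^sup>2 - h\<^sup>2)"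
    unfolding num using zero_le_power2[of "1 + \<sigma> * x"] by linarith
  then have "(1/4) / (5/4) \<le> R x"
    unfolding R_eq using den_pos den_le abs_lam_h2_le by (intro frac_le) auto
  then show ?thesis by simp
qed

lemma R_pos: "0 < R x"
  using R_ge[of x] by linarith

lemma inverse_den2_ge: "1 - 2 * (\<bar>lam\<bar> * h\<^sup>2) \<le> 1 / den\<^sup>2"
proof -
  define l where "l = \<bar>lam\<bar> * h\<^sup>2"
  have l: "0 \<le> l" "l \<le> 1/4" using abs_lam_h2_le by (auto simp: l_def)
  have "(1 - 2 * l) * den\<^sup>2 \<le> (1 - 2 * l) * (1 + l)\<^sup>2"
    using l den_le den_pos by (intro mult_left_mono power_mono) (auto simp: l_def)
  also have "\<dots> = 1 - 3 * l\<^sup>2 - 2 * l^3" by (simp add: power2_eq_square power3_eq_cube algebra_simps)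
  also have "\<dots> \<le> 1" using l zero_le_power[of l 3] zero_le_power2[of l] by linarith
  finally show ?thesis using den_pos by (simp add: l_def field_simps)
qed

lemma inverse_den2_le: "1 / den\<^sup>2 \<le> 1 + 4 * (\<bar>lam\<bar> * h\<^sup>2)"
proof -
  define l where "l = \<bar>lam\<bar> * h\<^sup>2"
  have l: "0 \<le> l" "l \<le> 1/4" using abs_lam_h2_le by (auto simp: l_def)
  have "1 \<le> 1 + l * (2 - 7 * l + 4 * l\<^sup>2)" using l by simp
  also have "\<dots> = (1 + 4 * l) * (1 - l)\<^sup>2" by (simp add: power2_eq_square algebra_simps)
  also have "\<dots> \<le> (1 + 4 * l) * den\<^sup>2"
    using l den_ge by (intro mult_left_mono power_mono) (auto simp: l_def)
  finally show ?thesis using den_pos by (simp add: l_def field_simps)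
qed

lemma inverse_den2_le_2: "1 / den\<^sup>2 \<le> 2"
  using inverse_den2_le abs_lam_h2_le by linarith

lemma K_ge_1: "1 \<le> K" and abs_lam_le_K: "\<bar>lam\<bar> \<le> K" and sigma2_le_K: "\<sigma>\<^sup>2 \<le> K"
  unfolding K_def by auto

lemma K_le_K2: "K \<le> K\<^sup>2"
proof -
  have "K * 1 \<le> K * K" using K_ge_1 by (intro mult_left_mono) auto
  then show ?thesis by (simp add: power2_eq_square)
qed

lemma K2_le_K4: "K\<^sup>2 \<le> K^4"
proof -
  have "K\<^sup>2 * 1 \<le> K\<^sup>2 * K\<^sup>2" using K_ge_1 K_le_K2 by (intro mult_left_mono) auto
  then show ?thesis by (simp flip: power_add)
qed

lemma lam2_le_K2: "lam\<^sup>2 \<le> K\<^sup>2"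
  using abs_lam_le_K by (metis abs_ge_zero power2_abs power_mono)

lemma sigma4_le_K2: "\<sigma>^4 \<le> K\<^sup>2"
  using power_mono[OF sigma2_le_K, of 2] by (simp flip: power_mult)

lemma sigma2_abs_lam_le_K2: "\<sigma>\<^sup>2 * \<bar>lam\<bar> \<le> K\<^sup>2"
  using mult_mono[OF sigma2_le_K abs_lam_le_K] K_ge_1 by (simp add: power2_eq_square)

lemma h_powers_le: "h^4 \<le> h\<^sup>2" "h^5 \<le> h^4" "h^8 \<le> h^4"
  using h_pos h_le_one by (auto intro: power_decreasing)

definition dev4_majorant :: "real \<Rightarrow> real" where
  "dev4_majorant x = (lam - \<sigma>\<^sup>2 / 2)^4 * h^8 + \<sigma>^4 * x^4 + (\<sigma>\<^sup>2 / 2)^4 * x^8"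

lemma dev4_le: "dev x ^ 4 \<le> 108 * dev4_majorant x"
proof -
  define N where "N = (lam - \<sigma>\<^sup>2 / 2) * h\<^sup>2 + \<sigma> * x + \<sigma>\<^sup>2 / 2 * x\<^sup>2"
  have "dev x ^ 4 = N^4 * (1 / den\<^sup>2)\<^sup>2"
    by (simp add: dev_eq_poly N_def power_divide power4_eq_xxxx power2_eq_square)
  also have "\<dots> \<le> N^4 * 2\<^sup>2" using inverse_den2_le_2 den_pos by (intro mult_left_mono power_mono) auto
  also have "N^4 \<le> 27 * dev4_majorant x"
  proof -
    have "N^4 \<le> 27 * (((lam - \<sigma>\<^sup>2 / 2) * h\<^sup>2)^4 + (\<sigma> * x)^4 + (\<sigma>\<^sup>2 / 2 * x\<^sup>2)^4)"
      unfolding N_def by (rule power4_sum3_le)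
    also have "\<dots> = 27 * dev4_majorant x"
      by (simp add: dev4_majorant_def power_mult_distrib power_divide flip: power_mult)
    finally show ?thesis .
  qed
  then have "N^4 * 2\<^sup>2 \<le> 27 * dev4_majorant x * 2\<^sup>2" by simp
  finally show ?thesis by simp
qed

text \<open>AM-GM: the cubic Taylor remainder splits into a term of order \<open>h\<^sup>2 dev\<^sup>2\<close> and a
  fourth-moment term.\<close>
lemma h_abs_dev3_le: "h * \<bar>dev x\<bar>^3 \<le> h\<^sup>2 / 2 * (dev x)\<^sup>2 + dev x ^ 4 / 2"
proof -
  have "0 \<le> (h * \<bar>dev x\<bar> - (dev x)\<^sup>2)\<^sup>2" by simp
  also have "\<dots> = h\<^sup>2 * (dev x)\<^sup>2 - 2 * (h * \<bar>dev x\<bar>^3) + dev x ^ 4"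
    by (simp add: power2_eq_square power3_eq_cube power4_eq_xxxx algebra_simps)
  finally show ?thesis by simp
qed

lemma R_powr_h_le:
  "R x powr h \<le> 1 + h * dev x + (h\<^sup>2 / 2 - h * (1 - h) / 2) * (dev x)\<^sup>2 + 54 * dev4_majorant x"
proof -
  have "R x powr h \<le> 1 + h * dev x - h * (1 - h) / 2 * (dev x)\<^sup>2 + h * \<bar>dev x\<bar>^3"
    using powr_le_taylor_2[OF h_pos h_le_one R_pos] unfolding dev_def by simp
  also have "\<dots> \<le> 1 + h * dev x - h * (1 - h) / 2 * (dev x)\<^sup>2
      + (h\<^sup>2 / 2 * (dev x)\<^sup>2 + 108 * dev4_majorant x / 2)"
    using h_abs_dev3_le[of x] dev4_le[of x] by simp
  finally show ?thesis by (simp add: algebra_simps)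
qed

lemma R_powr_minus_h_le:
  "R x powr (-h) \<le> 1 - h * dev x + (h * (h + 1) / 2 + 625 * h\<^sup>2 / 2) * (dev x)\<^sup>2
    + 33750 * dev4_majorant x"
proof -
  have "R x powr (-h) \<le> 1 - h * dev x + h * (h + 1) / 2 * (dev x)\<^sup>2 + 625 * h * \<bar>dev x\<bar>^3"
    using powr_minus_le_taylor_2[OF h_pos h_le_one R_ge] unfolding dev_def by simp
  also have "\<dots> \<le> 1 - h * dev x + h * (h + 1) / 2 * (dev x)\<^sup>2
      + 625 * (h\<^sup>2 / 2 * (dev x)\<^sup>2 + 108 * dev4_majorant x / 2)"
    using h_abs_dev3_le[of x] dev4_le[of x] by simp
  finally show ?thesis by (simp add: algebra_simps)
qed

definition E_dev2 :: real where
  "E_dev2 = ((lam * h\<^sup>2)\<^sup>2 + \<sigma>\<^sup>2 * h\<^sup>2 + 2 * (\<sigma>\<^sup>2 / 2)\<^sup>2 * h^4) / den\<^sup>2"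

definition E_dev4_majorant :: real where
  "E_dev4_majorant = (lam - \<sigma>\<^sup>2 / 2)^4 * h^8 + 3 * \<sigma>^4 * h^4 + 105 * (\<sigma>\<^sup>2 / 2)^4 * h^8"

lemma has_bochner_integral_dev: "has_bochner_integral lborel (\<lambda>x. \<phi> x * dev x) (lam * h\<^sup>2 / den)"
  using has_bochner_integral_divide_zero[OF
      has_bochner_integral_normal_quadratic[OF h_pos, of "lam * h\<^sup>2" \<sigma> "\<sigma>\<^sup>2 / 2"], of den]
  unfolding dev_eq by simp

lemma has_bochner_integral_dev2: "has_bochner_integral lborel (\<lambda>x. \<phi> x * (dev x)\<^sup>2) E_dev2"
  using has_bochner_integral_divide_zero[OF
      has_bochner_integral_normal_quadratic_sq[OF h_pos, of "lam * h\<^sup>2" \<sigma> "\<sigma>\<^sup>2 / 2"], of "den\<^sup>2"]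
  unfolding dev_eq E_dev2_def by (simp add: power_divide)

lemma has_bochner_integral_dev4_majorant:
  "has_bochner_integral lborel (\<lambda>x. \<phi> x * dev4_majorant x) E_dev4_majorant"
  using has_bochner_integral_normal_poly8[OF h_pos, of "(lam - \<sigma>\<^sup>2 / 2)^4 * h^8" 0 0 0 "\<sigma>^4"
      0 0 0 "(\<sigma>\<^sup>2 / 2)^4"]
  by (simp add: dev4_majorant_def E_dev4_majorant_def)

lemma has_bochner_integral_dev_poly:
  "has_bochner_integral lborel (\<lambda>x. \<phi> x * (1 + u1 * dev x + u2 * (dev x)\<^sup>2 + u3 * dev4_majorant x))
     (1 + u1 * (lam * h\<^sup>2 / den) + u2 * E_dev2 + u3 * E_dev4_majorant)"
proof -
  have "has_bochner_integral lborel (\<lambda>x. \<phi> x + u1 * (\<phi> x * dev x) + u2 * (\<phi> x * (dev x)\<^sup>2)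
      + u3 * (\<phi> x * dev4_majorant x)) (1 + u1 * (lam * h\<^sup>2 / den) + u2 * E_dev2 + u3 * E_dev4_majorant)"
    using integrable_normal_density[OF h_pos, of 0] integral_normal_density[OF h_pos, of 0]
    by (intro has_bochner_integral_add has_bochner_integral_mult_right has_bochner_integral_dev
        has_bochner_integral_dev2 has_bochner_integral_dev4_majorant)
      (auto simp: has_bochner_integral_iff)
  then show ?thesis by (simp add: algebra_simps)
qed

lemma E_dev4_majorant_le: "E_dev4_majorant \<le> 109 * K^4 * h^4"
proof -
  have "\<bar>lam - \<sigma>\<^sup>2 / 2\<bar> \<le> K"
    unfolding K_def abs_le_iff using zero_le_power2[of \<sigma>] abs_ge_self[of lam] abs_ge_minus_self[of lam]
    by linarith
  from power_mono[OF this, of 4] have "(lam - \<sigma>\<^sup>2 / 2)^4 \<le> K^4" by (simp add: power_even_abs)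
  then have "(lam - \<sigma>\<^sup>2 / 2)^4 * h^8 \<le> K^4 * h^4" using h_powers_le by (intro mult_mono) auto
  moreover have "(\<sigma>\<^sup>2 / 2)^4 * h^8 \<le> K^4 * h^4"
  proof -
    have "\<sigma>\<^sup>2 / 2 \<le> K" unfolding K_def by auto
    then have "(\<sigma>\<^sup>2 / 2)^4 \<le> K^4" by (intro power_mono) auto
    then show ?thesis using h_powers_le by (intro mult_mono) auto
  qed
  moreover have "\<sigma>^4 * h^4 \<le> K^4 * h^4"
    using sigma4_le_K2 K2_le_K4 by (intro mult_right_mono) auto
  ultimately show ?thesis unfolding E_dev4_majorant_def by linarith
qed

lemma E_dev2_le_K2: "E_dev2 \<le> 6 * K\<^sup>2 * h\<^sup>2"
proof -
  have "(lam * h\<^sup>2)\<^sup>2 \<le> K\<^sup>2 * h\<^sup>2"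
  proof -
    have "(lam * h\<^sup>2)\<^sup>2 = lam\<^sup>2 * h^4" by (simp add: power_mult_distrib flip: power_mult)
    also have "\<dots> \<le> K\<^sup>2 * h\<^sup>2" using lam2_le_K2 h_powers_le by (intro mult_mono) auto
    finally show ?thesis .
  qed
  moreover have "\<sigma>\<^sup>2 * h\<^sup>2 \<le> K\<^sup>2 * h\<^sup>2" using sigma2_le_K K_le_K2 by (intro mult_right_mono) auto
  moreover have "2 * (\<sigma>\<^sup>2 / 2)\<^sup>2 * h^4 \<le> K\<^sup>2 * h\<^sup>2"
  proof -
    have "2 * (\<sigma>\<^sup>2 / 2)\<^sup>2 = \<sigma>^4 / 2" by (simp add: power_divide flip: power_mult)
    also have "\<dots> \<le> K\<^sup>2" using sigma4_le_K2 zero_le_power2[of K] by linarith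
    finally show ?thesis using h_powers_le by (intro mult_mono) auto
  qed
  ultimately have "(lam * h\<^sup>2)\<^sup>2 + \<sigma>\<^sup>2 * h\<^sup>2 + 2 * (\<sigma>\<^sup>2 / 2)\<^sup>2 * h^4 \<le> 3 * (K\<^sup>2 * h\<^sup>2)" by linarith
  then have "((lam * h\<^sup>2)\<^sup>2 + \<sigma>\<^sup>2 * h\<^sup>2 + 2 * (\<sigma>\<^sup>2 / 2)\<^sup>2 * h^4) * (1 / den\<^sup>2)
      \<le> 3 * (K\<^sup>2 * h\<^sup>2) * 2"
    using inverse_den2_le_2 by (rule mult_mono) auto
  then show ?thesis by (simp add: E_dev2_def)
qed

lemma E_dev2_ge: "\<sigma>\<^sup>2 * h\<^sup>2 - 2 * (\<sigma>\<^sup>2 * \<bar>lam\<bar>) * h^4 \<le> E_dev2"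
proof -
  have "\<sigma>\<^sup>2 * h\<^sup>2 * (1 - 2 * (\<bar>lam\<bar> * h\<^sup>2)) \<le> \<sigma>\<^sup>2 * h\<^sup>2 * (1 / den\<^sup>2)"
    using inverse_den2_ge by (intro mult_left_mono) auto
  also have "\<dots> \<le> E_dev2" unfolding E_dev2_def by (simp add: divide_right_mono)
  finally show ?thesis by (simp add: algebra_simps power4_eq_xxxx power2_eq_square)
qed

lemma E_dev2_le: "E_dev2 \<le> \<sigma>\<^sup>2 * h\<^sup>2 + (4 * (\<sigma>\<^sup>2 * \<bar>lam\<bar>) + 2 * lam\<^sup>2 + \<sigma>^4) * h^4"
proof -
  have num: "(lam * h\<^sup>2)\<^sup>2 + \<sigma>\<^sup>2 * h\<^sup>2 + 2 * (\<sigma>\<^sup>2 / 2)\<^sup>2 * h^4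
      = \<sigma>\<^sup>2 * h\<^sup>2 + (lam\<^sup>2 + \<sigma>^4 / 2) * h^4"
    by (simp add: power_mult_distrib power_divide algebra_simps flip: power_mult)
  have "E_dev2 = \<sigma>\<^sup>2 * h\<^sup>2 * (1 / den\<^sup>2) + (lam\<^sup>2 + \<sigma>^4 / 2) * h^4 * (1 / den\<^sup>2)"
    unfolding E_dev2_def num by (simp add: add_divide_distrib)
  also have "\<dots> \<le> \<sigma>\<^sup>2 * h\<^sup>2 * (1 + 4 * (\<bar>lam\<bar> * h\<^sup>2)) + (lam\<^sup>2 + \<sigma>^4 / 2) * h^4 * 2"
    using inverse_den2_le inverse_den2_le_2 by (intro add_mono mult_left_mono) auto
  also have "\<dots> = \<sigma>\<^sup>2 * h\<^sup>2 + (4 * (\<sigma>\<^sup>2 * \<bar>lam\<bar>) + 2 * lam\<^sup>2 + \<sigma>^4) * h^4"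
    by (simp add: algebra_simps power4_eq_xxxx power2_eq_square)
  finally show ?thesis .
qed

lemma lam_h2_div_den: "lam * h\<^sup>2 / den = lam * h\<^sup>2 + lam\<^sup>2 * \<theta> * h^4 / den"
  using den_pos by (simp add: den_def field_simps power2_eq_square power4_eq_xxxx)

lemma h_lam2_theta_h4_div_den_le: "h * (lam\<^sup>2 * \<theta> * h^4 / den) \<le> 2 * K\<^sup>2 * h^4"
proof -
  have "lam\<^sup>2 * h^5 \<le> K\<^sup>2 * h^4" using lam2_le_K2 h_powers_le h_pos by (intro mult_mono) auto
  moreover have "\<theta> / den \<le> 2" using den_pos theta_le_one den_ge_3_4 by (simp add: pos_divide_le_eq)
  ultimately have "(lam\<^sup>2 * h^5) * (\<theta> / den) \<le> (K\<^sup>2 * h^4) * 2"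
    by (rule mult_mono) (use theta_nonneg den_pos in auto)
  moreover have "h * (lam\<^sup>2 * \<theta> * h^4 / den) = (lam\<^sup>2 * h^5) * (\<theta> / den)"
    by (simp add: eval_nat_numeral)
  ultimately show ?thesis by (simp only: mult.commute)
qed

definition C_pow :: real where
  "C_pow = 15000000 * K^4"

lemma powr_h_moment_bound:
  "1 + h * (lam * h\<^sup>2 / den) + (h\<^sup>2 / 2 - h * (1 - h) / 2) * E_dev2 + 54 * E_dev4_majorant
    \<le> 1 + h^3 * (lam - \<sigma>\<^sup>2 / 2) + C_pow * h^4"
proof -
  have "- (h / 2 * E_dev2) \<le> - (h^3 * \<sigma>\<^sup>2 / 2) + K\<^sup>2 * h^4"
  proof -
    have "h / 2 * (\<sigma>\<^sup>2 * h\<^sup>2 - 2 * (\<sigma>\<^sup>2 * \<bar>lam\<bar>) * h^4) \<le> h / 2 * E_dev2"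
      using E_dev2_ge h_pos by (intro mult_left_mono) auto
    moreover have "h / 2 * (\<sigma>\<^sup>2 * h\<^sup>2 - 2 * (\<sigma>\<^sup>2 * \<bar>lam\<bar>) * h^4)
        = h^3 * \<sigma>\<^sup>2 / 2 - (\<sigma>\<^sup>2 * \<bar>lam\<bar>) * h^5"
      by (simp add: eval_nat_numeral algebra_simps)
    moreover have "(\<sigma>\<^sup>2 * \<bar>lam\<bar>) * h^5 \<le> K\<^sup>2 * h^4"
      using sigma2_abs_lam_le_K2 h_powers_le h_pos by (intro mult_mono) auto
    ultimately show ?thesis by linarith
  qed
  moreover have "h\<^sup>2 * E_dev2 \<le> 6 * K^4 * h^4"
  proof -
    have "h\<^sup>2 * E_dev2 \<le> h\<^sup>2 * (6 * K\<^sup>2 * h\<^sup>2)" using E_dev2_le_K2 by (intro mult_left_mono) auto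
    also have "\<dots> = 6 * K\<^sup>2 * h^4" by (simp add: power4_eq_xxxx power2_eq_square)
    also have "\<dots> \<le> 6 * K^4 * h^4" using K2_le_K4 by (intro mult_right_mono) auto
    finally show ?thesis .
  qed
  moreover have "K\<^sup>2 * h^4 \<le> K^4 * h^4" using K2_le_K4 by (intro mult_right_mono) auto
  moreover have "0 \<le> K^4 * h^4" by simp
  moreover have "h * (lam * h\<^sup>2 / den) = h^3 * lam + h * (lam\<^sup>2 * \<theta> * h^4 / den)"
    unfolding lam_h2_div_den by (simp add: algebra_simps power3_eq_cube power2_eq_square)
  moreover have "(h\<^sup>2 / 2 - h * (1 - h) / 2) * E_dev2 = - (h / 2 * E_dev2) + h\<^sup>2 * E_dev2"
    by (simp add: field_simps power2_eq_square)
  moreover have "h^3 * (lam - \<sigma>\<^sup>2 / 2) = h^3 * lam - h^3 * \<sigma>\<^sup>2 / 2" by (simp add: algebra_simps)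
  ultimately show ?thesis
    using E_dev4_majorant_le h_lam2_theta_h4_div_den_le unfolding C_pow_def by linarith
qed

lemma h2_E_dev2_le: "h\<^sup>2 * E_dev2 \<le> 6 * K^4 * h^4"
proof -
  have "h\<^sup>2 * E_dev2 \<le> h\<^sup>2 * (6 * K\<^sup>2 * h\<^sup>2)" using E_dev2_le_K2 by (intro mult_left_mono) auto
  also have "\<dots> = 6 * K\<^sup>2 * h^4" by (simp add: power4_eq_xxxx power2_eq_square)
  also have "\<dots> \<le> 6 * K^4 * h^4" using K2_le_K4 by (intro mult_right_mono) auto
  finally show ?thesis .
qed

lemma powr_minus_h_moment_bound:
  "1 + (-h) * (lam * h\<^sup>2 / den) + (h * (h + 1) / 2 + 625 * h\<^sup>2 / 2) * E_dev2 + 33750 * E_dev4_majorant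
    \<le> 1 - h^3 * (lam - \<sigma>\<^sup>2 / 2) + C_pow * h^4"
proof -
  have "h / 2 * E_dev2 \<le> h^3 * \<sigma>\<^sup>2 / 2 + 4 * K\<^sup>2 * h^4"
  proof -
    define c where "c = 4 * (\<sigma>\<^sup>2 * \<bar>lam\<bar>) + 2 * lam\<^sup>2 + \<sigma>^4"
    have "h / 2 * E_dev2 \<le> h / 2 * (\<sigma>\<^sup>2 * h\<^sup>2 + c * h^4)"
      using E_dev2_le h_pos unfolding c_def by (intro mult_left_mono) auto
    also have "\<dots> = h^3 * \<sigma>\<^sup>2 / 2 + c / 2 * h^5" by (simp add: eval_nat_numeral algebra_simps)
    also have "c / 2 * h^5 \<le> 4 * K\<^sup>2 * h^4"
    proof -
      have "c \<le> 8 * K\<^sup>2"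
        unfolding c_def using sigma2_abs_lam_le_K2 lam2_le_K2 sigma4_le_K2 zero_le_power2[of K]
        by linarith
      then show ?thesis using h_powers_le h_pos by (intro mult_mono) (auto simp: c_def)
    qed
    finally show ?thesis by simp
  qed
  moreover have "0 \<le> h * (lam\<^sup>2 * \<theta> * h^4 / den)" using h_pos theta_nonneg den_pos by simp
  moreover have "(-h) * (lam * h\<^sup>2 / den) = - (h^3 * lam) - h * (lam\<^sup>2 * \<theta> * h^4 / den)"
    unfolding lam_h2_div_den by (simp add: algebra_simps power3_eq_cube power2_eq_square)
  moreover have "(h * (h + 1) / 2 + 625 * h\<^sup>2 / 2) * E_dev2 = h / 2 * E_dev2 + 313 * (h\<^sup>2 * E_dev2)"
    by (simp add: field_simps power2_eq_square)
  moreover have "K\<^sup>2 * h^4 \<le> K^4 * h^4" using K2_le_K4 by (intro mult_right_mono) auto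
  moreover have "0 \<le> K^4 * h^4" by simp
  moreover have "h^3 * (lam - \<sigma>\<^sup>2 / 2) = h^3 * lam - h^3 * \<sigma>\<^sup>2 / 2" by (simp add: algebra_simps)
  ultimately show ?thesis
    using h2_E_dev2_le E_dev4_majorant_le unfolding C_pow_def by linarith
qed

lemma integral_R_powr_h:
  shows "integrable lborel (\<lambda>x. \<phi> x * R x powr h)"
    and "(\<integral>x. \<phi> x * R x powr h \<partial>lborel) \<le> 1 + h^3 * (lam - \<sigma>\<^sup>2 / 2) + C_pow * h^4"
proof -
  have "\<phi> x * R x powr h
      \<le> \<phi> x * (1 + h * dev x + (h\<^sup>2 / 2 - h * (1 - h) / 2) * (dev x)\<^sup>2 + 54 * dev4_majorant x)" for x
    using R_powr_h_le by (intro mult_left_mono) auto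
  from nonneg_dominated_integral_le[OF has_bochner_integral_dev_poly _ _ this]
  show "integrable lborel (\<lambda>x. \<phi> x * R x powr h)"
    and "(\<integral>x. \<phi> x * R x powr h \<partial>lborel) \<le> 1 + h^3 * (lam - \<sigma>\<^sup>2 / 2) + C_pow * h^4"
    using powr_h_moment_bound by auto
qed

lemma integral_R_powr_minus_h:
  shows "integrable lborel (\<lambda>x. \<phi> x * R x powr (-h))"
    and "(\<integral>x. \<phi> x * R x powr (-h) \<partial>lborel) \<le> 1 - h^3 * (lam - \<sigma>\<^sup>2 / 2) + C_pow * h^4"
proof -
  have "\<phi> x * R x powr (-h)
      \<le> \<phi> x * (1 + (-h) * dev x + (h * (h + 1) / 2 + 625 * h\<^sup>2 / 2) * (dev x)\<^sup>2
        + 33750 * dev4_majorant x)" for x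
    using R_powr_minus_h_le by (intro mult_left_mono) auto
  from nonneg_dominated_integral_le[OF has_bochner_integral_dev_poly _ _ this]
  show "integrable lborel (\<lambda>x. \<phi> x * R x powr (-h))"
    and "(\<integral>x. \<phi> x * R x powr (-h) \<partial>lborel) \<le> 1 - h^3 * (lam - \<sigma>\<^sup>2 / 2) + C_pow * h^4"
    using powr_minus_h_moment_bound by auto
qed

definition R2_num :: real where
  "R2_num = (1 + lam * (1 - \<theta>) * h\<^sup>2)\<^sup>2 + \<sigma>\<^sup>2 * h\<^sup>2 + 2 * (\<sigma>\<^sup>2 / 2)\<^sup>2 * h^4"

definition E_R2 :: real where
  "E_R2 = R2_num / den\<^sup>2"

lemma has_bochner_integral_R2: "has_bochner_integral lborel (\<lambda>x. \<phi> x * (R x)\<^sup>2) E_R2"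
  using has_bochner_integral_divide_zero[OF has_bochner_integral_normal_quadratic_sq[OF h_pos,
        of "1 + lam * (1 - \<theta>) * h\<^sup>2" \<sigma> "\<sigma>\<^sup>2 / 2"], of "den\<^sup>2"]
  unfolding R_eq E_R2_def R2_num_def by (simp add: power_divide)

lemma R2_num_ge: "1/2 \<le> R2_num"
proof -
  have "3/4 \<le> 1 + lam * (1 - \<theta>) * h\<^sup>2"
    using abs_lam_one_minus_theta_h2_le abs_lam_h2_le by (auto simp: abs_le_iff)
  then have "(3/4)\<^sup>2 \<le> (1 + lam * (1 - \<theta>) * h\<^sup>2)\<^sup>2" by (intro power_mono) auto
  moreover have "0 \<le> \<sigma>\<^sup>2 * h\<^sup>2 + 2 * (\<sigma>\<^sup>2 / 2)\<^sup>2 * h^4" by simp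
  ultimately show ?thesis unfolding R2_num_def by (simp add: power2_eq_square)
qed

lemma E_R2_pos: "0 < E_R2"
  using R2_num_ge den_pos by (simp add: E_R2_def)

lemma R2_num_eq: "R2_num = 1 + (2 * lam * (1 - \<theta>) + \<sigma>\<^sup>2) * h\<^sup>2 + (lam\<^sup>2 * (1 - \<theta>)\<^sup>2 + \<sigma>^4 / 2) * h^4"
  unfolding R2_num_def by (simp add: power2_eq_square power4_eq_xxxx field_simps)

lemma ln_E_R2_eq: "ln E_R2 = ln R2_num - 2 * ln den"
  using R2_num_ge den_pos by (simp add: E_R2_def ln_div ln_realpow)

lemma ln_E_R2_le: "ln E_R2 \<le> (2 * lam + \<sigma>\<^sup>2) * h\<^sup>2 + 6 * K\<^sup>2 * h^4"
proof -
  have "ln R2_num \<le> R2_num - 1" using ln_le_minus_one R2_num_ge by simp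
  moreover have "- (lam * \<theta> * h\<^sup>2) - lam\<^sup>2 * \<theta>\<^sup>2 * h^4 / den \<le> ln den"
  proof -
    have "(den - 1) / den = - (lam * \<theta> * h\<^sup>2) - lam\<^sup>2 * \<theta>\<^sup>2 * h^4 / den"
      using den_pos by (simp add: den_def field_simps power2_eq_square power4_eq_xxxx)
    then show ?thesis using ln_diff_le[of 1 den] den_pos by (simp add: field_simps)
  qed
  moreover have "lam\<^sup>2 * \<theta>\<^sup>2 * h^4 / den \<le> 2 * K\<^sup>2 * h^4"
  proof -
    have "\<theta>\<^sup>2 / den \<le> 2"
      using den_pos theta_nonneg theta_le_one den_ge_3_4 power_le_one[of \<theta> 2]
      by (simp add: pos_divide_le_eq)
    then have "(lam\<^sup>2 * h^4) * (\<theta>\<^sup>2 / den) \<le> (K\<^sup>2 * h^4) * 2"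
      using lam2_le_K2 den_pos by (intro mult_mono) auto
    then show ?thesis by (simp add: mult_ac)
  qed
  moreover have "lam\<^sup>2 * (1 - \<theta>)\<^sup>2 * h^4 \<le> K\<^sup>2 * h^4"
  proof -
    have "(1 - \<theta>)\<^sup>2 \<le> 1" using theta_nonneg theta_le_one by (simp add: power_le_one)
    then have "lam\<^sup>2 * (1 - \<theta>)\<^sup>2 \<le> K\<^sup>2 * 1" using lam2_le_K2 by (intro mult_mono) auto
    then show ?thesis by (intro mult_right_mono) auto
  qed
  moreover have "\<sigma>^4 / 2 * h^4 \<le> K\<^sup>2 * h^4"
  proof -
    have "\<sigma>^4 / 2 \<le> K\<^sup>2" using sigma4_le_K2 zero_le_power2[of K] by linarith
    then show ?thesis by (intro mult_right_mono) auto
  qed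
  moreover have "R2_num - 1 + 2 * (lam * \<theta> * h\<^sup>2)
      = (2 * lam + \<sigma>\<^sup>2) * h\<^sup>2 + lam\<^sup>2 * (1 - \<theta>)\<^sup>2 * h^4 + \<sigma>^4 / 2 * h^4"
    unfolding R2_num_eq by (simp add: algebra_simps)
  ultimately show ?thesis unfolding ln_E_R2_eq by linarith
qed

lemma ln_E_R2_ge: "(2 * lam + \<sigma>\<^sup>2) * h\<^sup>2 - 50 * K^4 * h^4 \<le> ln E_R2"
proof -
  define u where "u = R2_num - 1"
  have "\<bar>u\<bar> \<le> 5 * K\<^sup>2 * h\<^sup>2"
  proof -
    have "\<bar>lam\<bar> * (1 - \<theta>) \<le> \<bar>lam\<bar> * 1" using theta_nonneg by (intro mult_left_mono) auto
    then have "\<bar>2 * lam * (1 - \<theta>)\<bar> \<le> 2 * K" using abs_lam_le_K theta_le_one by (simp add: abs_mult)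
    then have "\<bar>2 * lam * (1 - \<theta>) + \<sigma>\<^sup>2\<bar> \<le> 3 * K\<^sup>2"
      using sigma2_le_K K_le_K2 zero_le_power2[of \<sigma>] unfolding abs_le_iff by linarith
    then have "\<bar>(2 * lam * (1 - \<theta>) + \<sigma>\<^sup>2) * h\<^sup>2\<bar> \<le> 3 * K\<^sup>2 * h\<^sup>2"
      by (simp add: abs_mult mult_right_mono)
    moreover have "\<bar>(lam\<^sup>2 * (1 - \<theta>)\<^sup>2 + \<sigma>^4 / 2) * h^4\<bar> \<le> 2 * K\<^sup>2 * h\<^sup>2"
    proof -
      have "(1 - \<theta>)\<^sup>2 \<le> 1" using theta_nonneg theta_le_one by (simp add: power_le_one)
      then have "lam\<^sup>2 * (1 - \<theta>)\<^sup>2 \<le> lam\<^sup>2 * 1" by (intro mult_left_mono) auto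
      then have "lam\<^sup>2 * (1 - \<theta>)\<^sup>2 + \<sigma>^4 / 2 \<le> 2 * K\<^sup>2"
        using lam2_le_K2 sigma4_le_K2 zero_le_power2[of K] by linarith
      then show ?thesis using h_powers_le by (simp add: abs_mult) (intro mult_mono, auto)
    qed
    ultimately show ?thesis unfolding u_def R2_num_eq by linarith
  qed
  then have "u\<^sup>2 \<le> (5 * K\<^sup>2 * h\<^sup>2)\<^sup>2" by (metis abs_ge_zero power2_abs power_mono)
  then have u2: "u\<^sup>2 \<le> 25 * K^4 * h^4" by (simp add: power_mult_distrib flip: power_mult)
  have "u - 2 * u\<^sup>2 \<le> ln R2_num" using ln_ge_sub_sq[OF R2_num_ge] by (simp add: u_def)
  moreover have "ln den \<le> - (lam * \<theta> * h\<^sup>2)" using ln_le_minus_one[OF den_pos] by (simp add: den_def)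
  moreover have "u + 2 * (lam * \<theta> * h\<^sup>2)
      = (2 * lam + \<sigma>\<^sup>2) * h\<^sup>2 + (lam\<^sup>2 * (1 - \<theta>)\<^sup>2 * h^4 + \<sigma>^4 / 2 * h^4)"
    unfolding u_def R2_num_eq by (simp add: algebra_simps)
  moreover have "0 \<le> lam\<^sup>2 * (1 - \<theta>)\<^sup>2 * h^4 + \<sigma>^4 / 2 * h^4" by simp
  ultimately show ?thesis using u2 unfolding ln_E_R2_eq by linarith
qed

definition C_ms :: real where
  "C_ms = 50 * K^4"

lemma ln_E_R2_approx: "\<bar>ln E_R2 - (2 * lam + \<sigma>\<^sup>2) * h\<^sup>2\<bar> \<le> C_ms * h^4"
proof -
  have "6 * K\<^sup>2 \<le> 50 * K^4" using K2_le_K4 zero_le_power2[of K] by linarith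
  then have "6 * K\<^sup>2 * h^4 \<le> 50 * K^4 * h^4" by (intro mult_right_mono) auto
  then show ?thesis using ln_E_R2_le ln_E_R2_ge unfolding C_ms_def abs_le_iff by linarith
qed

end

section \<open>Growth rates of the scheme\<close>

locale milstein_run =
  fixes M :: "'a measure" and B :: "real \<Rightarrow> 'a \<Rightarrow> real" and \<theta> lam \<sigma> x0 dt :: real
    and X :: "nat \<Rightarrow> 'a \<Rightarrow> real"
  assumes theta_nonneg: "0 \<le> \<theta>" and theta_le_one: "\<theta> \<le> 1" and x0_nonzero: "x0 \<noteq> 0"
    and bm: "brownian_motion M B" and dt_pos: "0 < dt" and dt_less_one: "dt < 1"
    and step_small: "(\<bar>lam\<bar> + \<sigma>\<^sup>2) * dt \<le> 1/4"
    and scheme: "theta_milstein M B \<theta> lam \<sigma> x0 dt X"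
begin

sublocale S: milstein_step \<theta> lam \<sigma> "sqrt dt"
  using theta_nonneg theta_le_one dt_pos dt_less_one step_small by unfold_locales auto

sublocale P: prob_space M
  by (rule brownian_motion_prob_space[OF bm])

abbreviation Y :: "nat \<Rightarrow> 'a \<Rightarrow> real" where
  "Y k \<omega> \<equiv> milstein_factor \<theta> lam \<sigma> dt (bm_increment B dt k \<omega>)"

lemma R_eq_milstein_factor: "S.R = milstein_factor \<theta> lam \<sigma> dt"
  using dt_pos by simp

lemma Y_pos: "0 < Y k \<omega>"
  using S.R_pos unfolding R_eq_milstein_factor .

lemma X_eq_prod: "\<omega> \<in> space M \<Longrightarrow> X n \<omega> = x0 * (\<Prod>k<n. Y k \<omega>)"
  using theta_milstein_eq_prod[OF scheme] S.den_pos dt_pos by (simp add: S.den_def)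

lemma integral_prod_Y:
  assumes "g \<in> borel_measurable borel" and "integrable lborel (\<lambda>x. S.\<phi> x * g (S.R x))"
  shows "integrable M (\<lambda>\<omega>. \<Prod>k<n. g (Y k \<omega>))"
    and "(\<integral>\<omega>. (\<Prod>k<n. g (Y k \<omega>)) \<partial>M) = (\<integral>x. S.\<phi> x * g (S.R x) \<partial>lborel)^n"
  using P.integral_prod_iid[OF bm_increments_indep[OF bm dt_pos] bm_increment_distributed[OF bm dt_pos],
      of "\<lambda>x. g (milstein_factor \<theta> lam \<sigma> dt x)"] assms
  unfolding R_eq_milstein_factor by auto

lemma sqrt_dt_powers: "(sqrt dt)\<^sup>2 = dt" "sqrt dt ^ 4 = dt\<^sup>2"
proof -
  show "(sqrt dt)\<^sup>2 = dt" using dt_pos by simp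
  moreover have "sqrt dt ^ 4 = ((sqrt dt)\<^sup>2)\<^sup>2" by (simp flip: power_mult)
  ultimately show "sqrt dt ^ 4 = dt\<^sup>2" by simp
qed

definition ms_rate :: real where
  "ms_rate = ln S.E_R2 / (2 * dt)"

lemma sqrt_integral_X_sq: "sqrt (\<integral>\<omega>. (X n \<omega>)\<^sup>2 \<partial>M) = \<bar>x0\<bar> * exp (ms_rate * (real n * dt))"
proof -
  have "(\<integral>\<omega>. (X n \<omega>)\<^sup>2 \<partial>M) = (\<integral>\<omega>. x0\<^sup>2 * (\<Prod>k<n. (Y k \<omega>)\<^sup>2) \<partial>M)"
    by (intro Bochner_Integration.integral_cong) (simp_all add: X_eq_prod power_mult_distrib prod_power_distrib)
  also have "\<dots> = x0\<^sup>2 * S.E_R2 ^ n"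
    using integral_prod_Y[of "\<lambda>y. y\<^sup>2"] S.has_bochner_integral_R2 by (simp add: has_bochner_integral_iff)
  also have "\<dots> = (\<bar>x0\<bar> * exp (ms_rate * (real n * dt)))\<^sup>2"
  proof -
    have rate: "2 * (ms_rate * (real n * dt)) = real n * ln S.E_R2"
      unfolding ms_rate_def using dt_pos by (simp add: field_simps)
    have "(exp (ms_rate * (real n * dt)))\<^sup>2 = exp (2 * (ms_rate * (real n * dt)))"
      using exp_of_nat_mult[of 2 "ms_rate * (real n * dt)"] by simp
    also have "\<dots> = exp (real n * ln S.E_R2)" by (simp only: rate)
    also have "\<dots> = S.E_R2 ^ n" using exp_of_nat_mult[of n "ln S.E_R2"] S.E_R2_pos by simp
    finally show ?thesis by (simp add: power_mult_distrib)
  qed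
  finally show ?thesis by simp
qed

lemma ms_rate_approx: "\<bar>ms_rate - (lam + \<sigma>\<^sup>2 / 2)\<bar> \<le> S.C_ms * dt"
proof -
  have "\<bar>ln S.E_R2 - (2 * lam + \<sigma>\<^sup>2) * dt\<bar> \<le> S.C_ms * dt\<^sup>2"
    using S.ln_E_R2_approx sqrt_dt_powers by simp
  moreover have "ms_rate - (lam + \<sigma>\<^sup>2 / 2) = (ln S.E_R2 - (2 * lam + \<sigma>\<^sup>2) * dt) / (2 * dt)"
    unfolding ms_rate_def using dt_pos by (simp add: field_simps)
  ultimately have "\<bar>ms_rate - (lam + \<sigma>\<^sup>2 / 2)\<bar> \<le> S.C_ms * dt\<^sup>2 / (2 * dt)"
    using dt_pos by (simp add: abs_divide divide_right_mono)
  also have "\<dots> \<le> S.C_ms * dt" using dt_pos S.K_ge_1 by (simp add: S.C_ms_def power2_eq_square)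
  finally show ?thesis .
qed

lemma ms_limsup_bounds:
  "ereal (lam + \<sigma>\<^sup>2 / 2 - S.C_ms * dt)
      \<le> limsup (\<lambda>n. ereal (ln (sqrt (\<integral>\<omega>. (X n \<omega>)\<^sup>2 \<partial>M)) / (real n * dt)))"
  "limsup (\<lambda>n. ereal (ln (sqrt (\<integral>\<omega>. (X n \<omega>)\<^sup>2 \<partial>M)) / (real n * dt)))
      \<le> ereal (lam + \<sigma>\<^sup>2 / 2 + S.C_ms * dt)"
proof -
  let ?x = "\<lambda>n. sqrt (\<integral>\<omega>. (X n \<omega>)\<^sup>2 \<partial>M)"
  have x: "\<bar>?x n\<bar> = \<bar>x0\<bar> * exp (ms_rate * (real n * dt))" for n
    by (simp add: sqrt_integral_X_sq)
  then have x_nonzero: "?x n \<noteq> 0" for n using x0_nonzero by (metis abs_zero exp_gt_zero mult_pos_pos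
      zero_less_abs_iff less_irrefl)
  have "ereal ms_rate \<le> limsup (\<lambda>n. ereal (ln \<bar>?x n\<bar> / (real n * dt)))"
    using x0_nonzero dt_pos by (intro limsup_ln_rate_ge[where c="\<bar>x0\<bar>"]) (auto simp: x)
  moreover have "limsup (\<lambda>n. ereal (ln \<bar>?x n\<bar> / (real n * dt))) \<le> ereal ms_rate"
    using x0_nonzero dt_pos x_nonzero by (intro limsup_ln_rate_le[where c="\<bar>x0\<bar>"]) (auto simp: x)
  moreover have "\<bar>?x n\<bar> = ?x n" for n by simp
  ultimately show "ereal (lam + \<sigma>\<^sup>2 / 2 - S.C_ms * dt) \<le> limsup (\<lambda>n. ereal (ln (?x n) / (real n * dt)))"
    and "limsup (\<lambda>n. ereal (ln (?x n) / (real n * dt))) \<le> ereal (lam + \<sigma>\<^sup>2 / 2 + S.C_ms * dt)"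
    using ms_rate_approx by (auto simp: abs_le_iff intro: order_trans)
qed

lemma ms_exp_stable_if:
  assumes "lam + \<sigma>\<^sup>2 / 2 + S.C_ms * dt < 0"
  shows "ms_exp_stable M dt X"
proof -
  have "ms_rate < 0" using ms_rate_approx assms by (auto simp: abs_le_iff)
  then show ?thesis unfolding ms_exp_stable_def using x0_nonzero
    by (intro exI[of _ "\<bar>x0\<bar>"] conjI exI[of _ "- ms_rate"] always_eventually allI)
      (auto simp: sqrt_integral_X_sq)
qed

lemma ms_exp_blowup_if:
  assumes "0 < lam + \<sigma>\<^sup>2 / 2 - S.C_ms * dt"
  shows "ms_exp_blowup M dt X"
proof -
  have "0 < ms_rate" using ms_rate_approx assms by (auto simp: abs_le_iff)
  then show ?thesis unfolding ms_exp_blowup_def using x0_nonzero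
    by (intro exI[of _ "\<bar>x0\<bar>"] conjI exI[of _ "ms_rate"] always_eventually allI)
      (auto simp: sqrt_integral_X_sq)
qed

lemma AE_eventually_prod_Y_powr_less:
  assumes int: "integrable lborel (\<lambda>x. S.\<phi> x * S.R x powr p)"
    and le: "(\<integral>x. S.\<phi> x * S.R x powr p \<partial>lborel) \<le> exp a" and "a < b"
  shows "AE \<omega> in M. eventually (\<lambda>n. (\<Prod>k<n. Y k \<omega>) powr p < exp (real n * b)) sequentially"
proof -
  have "(\<lambda>y. y powr p) \<in> borel_measurable borel" by measurable
  note prod = integral_prod_Y[OF this int]
  have "AE \<omega> in M. eventually (\<lambda>n. (\<Prod>k<n. Y k \<omega> powr p) < exp (real n * b)) sequentially"
  proof (rule P.AE_eventually_less_exp[OF prod(1) _ _ \<open>a < b\<close>])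
    show "0 \<le> (\<Prod>k<n. Y k \<omega> powr p)" for n \<omega> by (simp add: prod_nonneg)
    have "0 \<le> (\<integral>x. S.\<phi> x * S.R x powr p \<partial>lborel)" by (intro integral_nonneg_AE) auto
    then have "(\<integral>x. S.\<phi> x * S.R x powr p \<partial>lborel)^n \<le> exp a ^ n" for n
      using le by (intro power_mono) auto
    then show "P.expectation (\<lambda>\<omega>. \<Prod>k<n. Y k \<omega> powr p) \<le> exp (real n * a)" for n
      by (simp add: prod(2) exp_of_nat_mult)
  qed
  then show ?thesis using Y_pos by (simp add: prod_powr_distrib less_imp_le)
qed

text \<open>Chernoff bounds with the exponents \<open>\<plusminus>sqrt dt\<close>: the expectation of
  \<open>(\<Prod>k<n. Y k)^(\<plusminus>sqrt dt)\<close> is at most \<open>exp (n (\<plusminus>(sqrt dt)^3 (lam - \<sigma>\<^sup>2/2) + C_pow dt\<^sup>2))\<close>;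
  doubling \<open>C_pow\<close> leaves the margin needed for Borel--Cantelli.\<close>
definition C_as :: real where
  "C_as = 2 * S.C_pow"

lemma AE_eventually_prod_Y_less:
  "AE \<omega> in M. eventually
     (\<lambda>n. (\<Prod>k<n. Y k \<omega>) < exp ((lam - \<sigma>\<^sup>2 / 2 + C_as * sqrt dt) * (real n * dt))) sequentially"
proof -
  define h where "h = sqrt dt"
  define m where "m = lam - \<sigma>\<^sup>2 / 2"
  have h: "0 < h" "h\<^sup>2 = dt" "h^4 = dt\<^sup>2" using dt_pos sqrt_dt_powers by (simp_all add: h_def)
  have "(\<integral>x. S.\<phi> x * S.R x powr h \<partial>lborel) \<le> exp (h^3 * m + S.C_pow * h^4)"
    using S.integral_R_powr_h(2) exp_ge_add_one_self[of "h^3 * m + S.C_pow * h^4"]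
    unfolding h_def m_def by linarith
  moreover have "h^3 * m + S.C_pow * h^4 < h * dt * (m + C_as * h)"
  proof -
    have "0 < S.C_pow * h^4" using S.K_ge_1 h(1) by (simp add: S.C_pow_def)
    moreover have "h * dt * (m + C_as * h) = h^3 * m + 2 * S.C_pow * h^4"
      using h by (simp add: C_as_def power3_eq_cube power4_eq_xxxx power2_eq_square algebra_simps)
    ultimately show ?thesis by simp
  qed
  ultimately have AE: "AE \<omega> in M. eventually
      (\<lambda>n. (\<Prod>k<n. Y k \<omega>) powr h < exp (real n * (h * dt * (m + C_as * h)))) sequentially"
    using S.integral_R_powr_h(1) unfolding h_def by (intro AE_eventually_prod_Y_powr_less)
  have less: "P < exp ((m + C_as * h) * (real n * dt))"
    if "P powr h < exp (real n * (h * dt * (m + C_as * h)))" "0 < P" for P n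
  proof -
    have "exp (real n * (h * dt * (m + C_as * h))) = exp ((m + C_as * h) * (real n * dt)) powr h"
      by (simp add: exp_powr_real mult_ac)
    then show ?thesis using that powr_less_cancel2[of h P] h(1) by simp
  qed
  show ?thesis unfolding h_def[symmetric] m_def[symmetric]
    using AE by eventually_elim (auto elim!: eventually_mono intro!: less prod_pos Y_pos)
qed

lemma AE_eventually_prod_Y_greater:
  "AE \<omega> in M. eventually
     (\<lambda>n. exp ((lam - \<sigma>\<^sup>2 / 2 - C_as * sqrt dt) * (real n * dt)) < (\<Prod>k<n. Y k \<omega>)) sequentially"
proof -
  define h where "h = sqrt dt"
  define m where "m = lam - \<sigma>\<^sup>2 / 2"
  have h: "0 < h" "h\<^sup>2 = dt" "h^4 = dt\<^sup>2" using dt_pos sqrt_dt_powers by (simp_all add: h_def)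
  have "(\<integral>x. S.\<phi> x * S.R x powr (-h) \<partial>lborel) \<le> exp (- (h^3 * m) + S.C_pow * h^4)"
    using S.integral_R_powr_minus_h(2) exp_ge_add_one_self[of "- (h^3 * m) + S.C_pow * h^4"]
    unfolding h_def m_def by linarith
  moreover have "- (h^3 * m) + S.C_pow * h^4 < (-h) * dt * (m - C_as * h)"
  proof -
    have "0 < S.C_pow * h^4" using S.K_ge_1 h(1) by (simp add: S.C_pow_def)
    moreover have "(-h) * dt * (m - C_as * h) = - (h^3 * m) + 2 * S.C_pow * h^4"
      using h by (simp add: C_as_def power3_eq_cube power4_eq_xxxx power2_eq_square algebra_simps)
    ultimately show ?thesis by simp
  qed
  ultimately have AE: "AE \<omega> in M. eventually
      (\<lambda>n. (\<Prod>k<n. Y k \<omega>) powr (-h) < exp (real n * ((-h) * dt * (m - C_as * h)))) sequentially"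
    using S.integral_R_powr_minus_h(1) unfolding h_def by (intro AE_eventually_prod_Y_powr_less)
  have greater: "exp ((m - C_as * h) * (real n * dt)) < P"
    if "P powr (-h) < exp (real n * ((-h) * dt * (m - C_as * h)))" "0 < P" for P n
  proof (rule ccontr)
    assume "\<not> exp ((m - C_as * h) * (real n * dt)) < P"
    then have "exp ((m - C_as * h) * (real n * dt)) powr (-h) \<le> P powr (-h)"
      using that(2) h(1) by (intro powr_mono2') auto
    moreover have "exp (real n * ((-h) * dt * (m - C_as * h)))
        = exp ((m - C_as * h) * (real n * dt)) powr (-h)"
      by (simp add: exp_powr_real mult_ac)
    ultimately show False using that(1) by simp
  qed
  show ?thesis unfolding h_def[symmetric] m_def[symmetric]
    using AE by eventually_elim (auto elim!: eventually_mono intro!: greater prod_pos Y_pos)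
qed

lemma AE_eventually_abs_X_bounds:
  "AE \<omega> in M.
     eventually (\<lambda>n. \<bar>X n \<omega>\<bar> \<le> \<bar>x0\<bar> * exp ((lam - \<sigma>\<^sup>2 / 2 + C_as * sqrt dt) * (real n * dt)))
       sequentially \<and>
     eventually (\<lambda>n. \<bar>x0\<bar> * exp ((lam - \<sigma>\<^sup>2 / 2 - C_as * sqrt dt) * (real n * dt)) \<le> \<bar>X n \<omega>\<bar>)
       sequentially"
  using AE_eventually_prod_Y_less AE_eventually_prod_Y_greater AE_space
proof eventually_elim
  case (elim \<omega>)
  have abs_X: "\<bar>X n \<omega>\<bar> = \<bar>x0\<bar> * (\<Prod>k<n. Y k \<omega>)" for n
    using X_eq_prod[OF elim(3)] Y_pos by (simp add: abs_mult prod_pos less_imp_le)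
  have "eventually (\<lambda>n. \<bar>X n \<omega>\<bar> \<le> \<bar>x0\<bar> * exp ((lam - \<sigma>\<^sup>2 / 2 + C_as * sqrt dt) * (real n * dt)))
      sequentially"
    using elim(1) by eventually_elim (unfold abs_X, intro mult_left_mono, auto)
  moreover have "eventually (\<lambda>n. \<bar>x0\<bar> * exp ((lam - \<sigma>\<^sup>2 / 2 - C_as * sqrt dt) * (real n * dt))
      \<le> \<bar>X n \<omega>\<bar>) sequentially"
    using elim(2) by eventually_elim (unfold abs_X, intro mult_left_mono, auto)
  ultimately show ?case ..
qed

lemma AE_as_limsup_bounds:
  "AE \<omega> in M.
     ereal (lam - \<sigma>\<^sup>2 / 2 - C_as * sqrt dt) \<le> limsup (\<lambda>n. ereal (ln \<bar>X n \<omega>\<bar> / (real n * dt))) \<and>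
     limsup (\<lambda>n. ereal (ln \<bar>X n \<omega>\<bar> / (real n * dt))) \<le> ereal (lam - \<sigma>\<^sup>2 / 2 + C_as * sqrt dt)"
  using AE_eventually_abs_X_bounds AE_space
proof eventually_elim
  case (elim \<omega>)
  have "X n \<omega> \<noteq> 0" for n
    using X_eq_prod[OF elim(2)] Y_pos x0_nonzero by (simp add: prod_pos less_imp_neq[symmetric])
  moreover have "0 < \<bar>x0\<bar>" using x0_nonzero by simp
  ultimately show ?case
    using elim(1) dt_pos by (auto intro!: limsup_ln_rate_le[where c="\<bar>x0\<bar>"]
        limsup_ln_rate_ge[where c="\<bar>x0\<bar>"])
qed

lemma as_exp_stable_if:
  assumes "lam - \<sigma>\<^sup>2 / 2 + C_as * sqrt dt < 0"
  shows "as_exp_stable M dt X"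
proof -
  have "AE \<omega> in M. \<exists>C>0. \<forall>\<^sub>F n in sequentially.
      \<bar>X n \<omega>\<bar> \<le> C * exp ((lam - \<sigma>\<^sup>2 / 2 + C_as * sqrt dt) * (real n * dt))"
    using AE_eventually_abs_X_bounds
    by (rule eventually_mono) (use x0_nonzero in \<open>auto intro!: exI[of _ "\<bar>x0\<bar>"]\<close>)
  moreover have "0 < - (lam - \<sigma>\<^sup>2 / 2 + C_as * sqrt dt)" using assms by simp
  ultimately show ?thesis unfolding as_exp_stable_def
    by (intro exI[of _ "- (lam - \<sigma>\<^sup>2 / 2 + C_as * sqrt dt)"] conjI) (simp_all only: minus_minus)
qed

lemma as_exp_blowup_if:
  assumes "0 < lam - \<sigma>\<^sup>2 / 2 - C_as * sqrt dt"
  shows "as_exp_blowup M dt X"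
proof -
  have "AE \<omega> in M. \<exists>C>0. \<forall>\<^sub>F n in sequentially.
      C * exp ((lam - \<sigma>\<^sup>2 / 2 - C_as * sqrt dt) * (real n * dt)) \<le> \<bar>X n \<omega>\<bar>"
    using AE_eventually_abs_X_bounds
    by (rule eventually_mono) (use x0_nonzero in \<open>auto intro!: exI[of _ "\<bar>x0\<bar>"]\<close>)
  then show ?thesis unfolding as_exp_blowup_def
    using assms by (intro exI[of _ "lam - \<sigma>\<^sup>2 / 2 - C_as * sqrt dt"]) auto
qed

end

lemma small_step_sizes_exist:
  fixes s a m c5 c6 :: real
  shows "\<exists>dt3. 0 < dt3 \<and> dt3 < 1 \<and> (\<forall>dt. 0 < dt \<and> dt < dt3 \<longrightarrow>
    s * dt \<le> 1/4 \<and> (a \<noteq> 0 \<longrightarrow> c5 * dt < \<bar>a\<bar>) \<and> (m \<noteq> 0 \<longrightarrow> c6 * sqrt dt < \<bar>m\<bar>))"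
proof -
  have small: "\<forall>\<^sub>F dt in at_right 0. (b \<noteq> 0 \<longrightarrow> f dt < \<bar>b\<bar>)"
    if "(f \<longlongrightarrow> 0) (at_right 0)" for f :: "real \<Rightarrow> real" and b :: real
    using order_tendstoD(2)[OF that, of "\<bar>b\<bar>"] by (cases "b = 0") auto
  have lim: "((\<lambda>dt. c * dt) \<longlongrightarrow> 0) (at_right 0)" "((\<lambda>dt. c * sqrt dt) \<longlongrightarrow> 0) (at_right 0)"
    for c :: real
    by (auto intro!: tendsto_eq_intros)
  have "\<forall>\<^sub>F dt in at_right 0. s * dt < 1/4"
    using order_tendstoD(2)[OF lim(1)[of s], of "1/4"] by simp
  then have "\<forall>\<^sub>F dt in at_right 0. s * dt \<le> 1/4 \<and> (a \<noteq> 0 \<longrightarrow> c5 * dt < \<bar>a\<bar>)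
      \<and> (m \<noteq> 0 \<longrightarrow> c6 * sqrt dt < \<bar>m\<bar>)"
    using small[OF lim(1)] small[OF lim(2)] by eventually_elim auto
  then obtain b where "0 < b" and b: "\<And>dt. 0 < dt \<Longrightarrow> dt < b \<Longrightarrow> s * dt \<le> 1/4
      \<and> (a \<noteq> 0 \<longrightarrow> c5 * dt < \<bar>a\<bar>) \<and> (m \<noteq> 0 \<longrightarrow> c6 * sqrt dt < \<bar>m\<bar>)"
    unfolding eventually_at_right_field by auto
  then show ?thesis by (intro exI[of _ "min b (1/2)"]) auto
qed

theorem proposition3p2:
  fixes M :: "'a measure" and B :: "real \<Rightarrow> 'a \<Rightarrow> real"
    and \<theta> lam \<sigma> x0 :: real
  assumes "0 \<le> \<theta>" "\<theta> \<le> 1" "x0 \<noteq> 0" "brownian_motion M B"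
  shows "\<exists>dt3 C5 C6. 0 < dt3 \<and> dt3 < 1 \<and> C5 > 0 \<and> C6 > 0 \<and>
    (\<forall>dt X. 0 < dt \<and> dt < dt3 \<and> 1 - lam * \<theta> * dt \<noteq> 0 \<and>
            theta_milstein M B \<theta> lam \<sigma> x0 dt X \<longrightarrow>
      ereal (lam + \<sigma>\<^sup>2 / 2 - C5 * dt)
        \<le> limsup (\<lambda>n. ereal (ln (sqrt (integral\<^sup>L M (\<lambda>\<omega>. (X n \<omega>)\<^sup>2))) / (real n * dt))) \<and>
      limsup (\<lambda>n. ereal (ln (sqrt (integral\<^sup>L M (\<lambda>\<omega>. (X n \<omega>)\<^sup>2))) / (real n * dt)))
        \<le> ereal (lam + \<sigma>\<^sup>2 / 2 + C5 * dt) \<and>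
      (AE \<omega> in M.
         ereal (lam - \<sigma>\<^sup>2 / 2 - C6 * sqrt dt)
           \<le> limsup (\<lambda>n. ereal (ln \<bar>X n \<omega>\<bar> / (real n * dt))) \<and>
         limsup (\<lambda>n. ereal (ln \<bar>X n \<omega>\<bar> / (real n * dt)))
           \<le> ereal (lam - \<sigma>\<^sup>2 / 2 + C6 * sqrt dt)) \<and>
      (lam + \<sigma>\<^sup>2 / 2 < 0 \<longrightarrow> ms_exp_stable M dt X) \<and>
      (lam + \<sigma>\<^sup>2 / 2 > 0 \<longrightarrow> ms_exp_blowup M dt X) \<and>
      (lam - \<sigma>\<^sup>2 / 2 < 0 \<longrightarrow> as_exp_stable M dt X) \<and>
      (lam - \<sigma>\<^sup>2 / 2 > 0 \<longrightarrow> as_exp_blowup M dt X))"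
proof -
  define K where "K = 1 + \<bar>lam\<bar> + \<sigma>\<^sup>2"
  define C5 where "C5 = 50 * K^4"
  define C6 where "C6 = 30000000 * K^4"
  have "0 < K" unfolding K_def by (simp add: add_pos_nonneg)
  then have C_pos: "0 < C5" "0 < C6" unfolding C5_def C6_def by simp_all
  obtain dt3 where dt3: "0 < dt3" "dt3 < 1" and small: "\<And>dt. 0 < dt \<Longrightarrow> dt < dt3 \<Longrightarrow>
      (\<bar>lam\<bar> + \<sigma>\<^sup>2) * dt \<le> 1/4 \<and> (lam + \<sigma>\<^sup>2 / 2 \<noteq> 0 \<longrightarrow> C5 * dt < \<bar>lam + \<sigma>\<^sup>2 / 2\<bar>)
        \<and> (lam - \<sigma>\<^sup>2 / 2 \<noteq> 0 \<longrightarrow> C6 * sqrt dt < \<bar>lam - \<sigma>\<^sup>2 / 2\<bar>)"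
    using small_step_sizes_exist by metis
  show ?thesis
  proof (intro exI conjI allI impI)
    fix dt X
    assume "0 < dt \<and> dt < dt3 \<and> 1 - lam * \<theta> * dt \<noteq> 0 \<and> theta_milstein M B \<theta> lam \<sigma> x0 dt X"
    then have dt: "0 < dt" "dt < dt3" and scheme: "theta_milstein M B \<theta> lam \<sigma> x0 dt X" by auto
    note small_dt = small[OF dt]
    interpret milstein_run M B \<theta> lam \<sigma> x0 dt X
      using assms dt dt3 small_dt scheme by unfold_locales auto
    have C: "S.C_ms = C5" "C_as = C6"
      by (simp_all add: C5_def C6_def K_def S.C_ms_def C_as_def S.C_pow_def S.K_def)
    show "ereal (lam + \<sigma>\<^sup>2 / 2 - C5 * dt)
        \<le> limsup (\<lambda>n. ereal (ln (sqrt (integral\<^sup>L M (\<lambda>\<omega>. (X n \<omega>)\<^sup>2))) / (real n * dt)))"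
      "limsup (\<lambda>n. ereal (ln (sqrt (integral\<^sup>L M (\<lambda>\<omega>. (X n \<omega>)\<^sup>2))) / (real n * dt)))
        \<le> ereal (lam + \<sigma>\<^sup>2 / 2 + C5 * dt)"
      using ms_limsup_bounds unfolding C .
    show "AE \<omega> in M.
        ereal (lam - \<sigma>\<^sup>2 / 2 - C6 * sqrt dt) \<le> limsup (\<lambda>n. ereal (ln \<bar>X n \<omega>\<bar> / (real n * dt))) \<and>
        limsup (\<lambda>n. ereal (ln \<bar>X n \<omega>\<bar> / (real n * dt))) \<le> ereal (lam - \<sigma>\<^sup>2 / 2 + C6 * sqrt dt)"
      using AE_as_limsup_bounds unfolding C .
    show "ms_exp_stable M dt X" if "lam + \<sigma>\<^sup>2 / 2 < 0"
      using ms_exp_stable_if small_dt that unfolding C by auto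
    show "ms_exp_blowup M dt X" if "lam + \<sigma>\<^sup>2 / 2 > 0"
      using ms_exp_blowup_if small_dt that unfolding C by auto
    show "as_exp_stable M dt X" if "lam - \<sigma>\<^sup>2 / 2 < 0"
      using as_exp_stable_if small_dt that unfolding C by auto
    show "as_exp_blowup M dt X" if "lam - \<sigma>\<^sup>2 / 2 > 0"
      using as_exp_blowup_if small_dt that unfolding C by auto
  qed (use dt3 C_pos in auto)
qed

end
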